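(* Let $G$ be an abelian group and $B=\bigoplus_{i\in G}B_i$ a $G$-graded integral domain finitely generated as a $k$-algebra, where $k$ is a field of characteristic zero with $k\subseteq B_0$. Let $f$ be a cylindrical element of $B$ and $d=\deg(f)\in G$. Then there exists a nonzero homogeneous locally nilpotent derivation $D:B^{(d)}\to B^{(d)}$ such that $\ker(D)\not\subseteq B_0$ and, for some $n\ge1$, $f^n\in D(B^{(d)})\cap\ker(D)$.
   Context: $B^{(d)}=\bigoplus_{i\in\langle d\rangle}B_i$. For nonzero homogeneous $f$, $B_{(f)}$ is the degree-$0$ subring of $B_f$. A ring is a polynomial ring in one variable if it is a polynomial ring in one variable over some subring (zero ring counts). For a $G$-graded ring $B$, $f$ is cylindrical if it is nonzero and homogeneous, $\deg(f)$ has infinite order in $G$, and $B_{(f)}$ is a polynomial ring in one variable. A derivation is homogeneous if it shifts degrees by a fixed group element; locally nilpotent if every element is killed by some power of it. *)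

theory Defs
  imports "HOL-Computational_Algebra.Polynomial" "HOL-Computational_Algebra.Fraction_Field"
begin

definition is_subring :: "'a::comm_ring_1 set \<Rightarrow> bool" where
  "is_subring A \<longleftrightarrow> 0 \<in> A \<and> 1 \<in> A \<and> (\<forall>x\<in>A. \<forall>y\<in>A. x + y \<in> A \<and> x * y \<in> A) \<and> (\<forall>x\<in>A. - x \<in> A)"

definition is_subfield :: "'a::comm_ring_1 set \<Rightarrow> bool" where
  "is_subfield K \<longleftrightarrow> is_subring K \<and> (\<forall>x\<in>K. x \<noteq> 0 \<longrightarrow> (\<exists>y\<in>K. x * y = 1))"

inductive_set alg_gen :: "'a::comm_ring_1 set \<Rightarrow> 'a set \<Rightarrow> 'a set" for K S where
  base_K: "c \<in> K \<Longrightarrow> c \<in> alg_gen K S"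
| base_S: "s \<in> S \<Longrightarrow> s \<in> alg_gen K S"
| add: "x \<in> alg_gen K S \<Longrightarrow> y \<in> alg_gen K S \<Longrightarrow> x + y \<in> alg_gen K S"
| mult: "x \<in> alg_gen K S \<Longrightarrow> y \<in> alg_gen K S \<Longrightarrow> x * y \<in> alg_gen K S"

definition finitely_generated_algebra :: "'a::comm_ring_1 set \<Rightarrow> bool" where
  "finitely_generated_algebra K \<longleftrightarrow> (\<exists>S. finite S \<and> alg_gen K S = UNIV)"

definition poly_ring_one_var :: "'a::comm_ring_1 set \<Rightarrow> bool" where
  "poly_ring_one_var R \<longleftrightarrow>
     (\<exists>A t. is_subring A \<and> A \<subseteq> R \<and> t \<in> R \<and>
        R = {poly p t | p. \<forall>i. coeff p i \<in> A} \<and>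
        (\<forall>p. (\<forall>i. coeff p i \<in> A) \<longrightarrow> poly p t = 0 \<longrightarrow> p = 0))"

fun nsm :: "nat \<Rightarrow> 'g::ab_group_add \<Rightarrow> 'g" where
  "nsm 0 g = 0"
| "nsm (Suc n) g = g + nsm n g"

definition cyc :: "'g::ab_group_add \<Rightarrow> 'g set" where
  "cyc d = {nsm n d | n. True} \<union> {- nsm n d | n. True}"

definition infinite_order :: "'g::ab_group_add \<Rightarrow> bool" where
  "infinite_order d \<longleftrightarrow> (\<forall>n>0. nsm n d \<noteq> 0)"

text \<open>Bg is a G-grading of the ring (whole type 'b), B = \<Oplus>_i Bg i, with K \<subseteq> B_0.\<close>
definition is_grading :: "('g::ab_group_add \<Rightarrow> 'b::comm_ring_1 set) \<Rightarrow> bool" where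
  "is_grading Bg \<longleftrightarrow>
     (\<forall>i. 0 \<in> Bg i \<and> (\<forall>x\<in>Bg i. \<forall>y\<in>Bg i. x + y \<in> Bg i) \<and> (\<forall>x\<in>Bg i. - x \<in> Bg i)) \<and>
     (\<forall>i j. \<forall>x\<in>Bg i. \<forall>y\<in>Bg j. x * y \<in> Bg (i + j)) \<and>
     (\<forall>b. \<exists>!c. finite {i. c i \<noteq> 0} \<and> (\<forall>i. c i \<in> Bg i) \<and> b = (\<Sum>i\<in>{i. c i \<noteq> 0}. c i))"

definition homogeneous :: "('g \<Rightarrow> 'b set) \<Rightarrow> 'b \<Rightarrow> bool" where
  "homogeneous Bg b \<longleftrightarrow> (\<exists>i. b \<in> Bg i)"

definition veronese :: "('g::ab_group_add \<Rightarrow> 'b::comm_ring_1 set) \<Rightarrow> 'g \<Rightarrow> 'b set" where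
  "veronese Bg d = {b. \<exists>c. finite {i. c i \<noteq> 0} \<and> (\<forall>i. c i \<in> Bg i) \<and>
                          {i. c i \<noteq> 0} \<subseteq> cyc d \<and> b = (\<Sum>i\<in>{i. c i \<noteq> 0}. c i)}"

text \<open>Degree-0 subring B_(f) of the localization B_f, inside the fraction field
  (B is a domain): the elements a / f^n with a homogeneous of degree n*deg f.\<close>
definition deg0_loc :: "('g::ab_group_add \<Rightarrow> 'b::idom set) \<Rightarrow> 'g \<Rightarrow> 'b \<Rightarrow> 'b fract set" where
  "deg0_loc Bg d f = {Fract a (f ^ n) | a n. a \<in> Bg (nsm n d)}"

definition cylindrical :: "('g::ab_group_add \<Rightarrow> 'b::idom set) \<Rightarrow> 'b \<Rightarrow> bool" where
  "cylindrical Bg f \<longleftrightarrow> f \<noteq> 0 \<and>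
     (\<exists>d. f \<in> Bg d \<and> infinite_order d \<and> poly_ring_one_var (deg0_loc Bg d f))"

definition is_derivation_on :: "'b::comm_ring_1 set \<Rightarrow> ('b \<Rightarrow> 'b) \<Rightarrow> bool" where
  "is_derivation_on R D \<longleftrightarrow> (\<forall>x\<in>R. D x \<in> R) \<and>
     (\<forall>x\<in>R. \<forall>y\<in>R. D (x + y) = D x + D y \<and> D (x * y) = x * D y + y * D x)"

definition locally_nilpotent_on :: "'b::comm_ring_1 set \<Rightarrow> ('b \<Rightarrow> 'b) \<Rightarrow> bool" where
  "locally_nilpotent_on R D \<longleftrightarrow> (\<forall>x\<in>R. \<exists>n. (D ^^ n) x = 0)"

definition homogeneous_derivation_on ::
    "('g::ab_group_add \<Rightarrow> 'b::comm_ring_1 set) \<Rightarrow> 'b set \<Rightarrow> ('b \<Rightarrow> 'b) \<Rightarrow> bool" where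
  "homogeneous_derivation_on Bg R D \<longleftrightarrow> (\<exists>e. \<forall>i. \<forall>x\<in>Bg i \<inter> R. D x \<in> Bg (i + e))"

end

theory Submission
  imports Defs "HOL-Library.Ramsey" "HOL-Computational_Algebra.Polynomial_Factorial"
begin

text \<open>
  Write \<open>B\<^sub>(\<^sub>f\<^sub>) = A[t]\<close> with \<open>t\<close> transcendental over \<open>A\<close>. As \<open>deg f\<close> has infinite
  order, \<open>f\<close> is transcendental over \<open>B\<^sub>(\<^sub>f\<^sub>)\<close>, and \<open>B\<^sup>(\<^sup>d\<^sup>)\<^sub>f = A[t][f, 1/f]\<close>. The
  derivative \<open>\<partial>/\<partial>t\<close>, extended by \<open>\<partial>f = 0\<close>, is a locally nilpotent derivation of
  \<open>B\<^sup>(\<^sup>d\<^sup>)\<^sub>f\<close> preserving degrees. Since \<open>B\<^sup>(\<^sup>d\<^sup>)\<close> is a finitely generated algebra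
  (Dickson's lemma), \<open>D = f\<^sup>N \<partial>/\<partial>t\<close> maps \<open>B\<^sup>(\<^sup>d\<^sup>)\<close> into itself for large \<open>N\<close>. Then \<open>D\<close>
  is homogeneous of degree \<open>N d\<close>, kills \<open>f\<close>, and \<open>D a = f\<^sup>N\<^sup>+\<^sup>m\<close> if \<open>t = a / f\<^sup>m\<close>.
\<close>

context
  fixes S :: "'a::comm_ring_1 set"
  assumes S: "is_subring S"
begin

lemma subring_0: "0 \<in> S"
  and subring_1: "1 \<in> S"
  and subring_add: "x \<in> S \<Longrightarrow> y \<in> S \<Longrightarrow> x + y \<in> S"
  and subring_mult: "x \<in> S \<Longrightarrow> y \<in> S \<Longrightarrow> x * y \<in> S"
  and subring_uminus: "x \<in> S \<Longrightarrow> - x \<in> S"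
  using S unfolding is_subring_def by blast+

lemma subring_diff: "x \<in> S \<Longrightarrow> y \<in> S \<Longrightarrow> x - y \<in> S"
  using subring_add subring_uminus by (metis diff_conv_add_uminus)

lemma subring_sum: "(\<And>i. i \<in> I \<Longrightarrow> g i \<in> S) \<Longrightarrow> sum g I \<in> S"
  by (induction I rule: infinite_finite_induct) (auto intro: subring_0 subring_add)

lemma subring_power: "x \<in> S \<Longrightarrow> x ^ n \<in> S"
  by (induction n) (auto intro: subring_1 subring_mult)

lemma subring_of_nat: "of_nat n \<in> S"
  by (induction n) (auto intro: subring_0 subring_1 subring_add)

end

definition poly_over :: "'a::comm_ring_1 set \<Rightarrow> 'a poly \<Rightarrow> bool" where
  "poly_over S p \<longleftrightarrow> (\<forall>i. coeff p i \<in> S)"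

definition adjoin :: "'a::comm_ring_1 set \<Rightarrow> 'a \<Rightarrow> 'a set" where
  "adjoin S u = {poly p u | p. poly_over S p}"

context
  fixes S :: "'a::idom set"
  assumes S: "is_subring S"
begin

lemma poly_over_const: "c \<in> S \<Longrightarrow> poly_over S [:c:]"
  using S by (simp add: poly_over_def subring_0 coeff_pCons split: nat.splits)

lemma poly_over_0: "poly_over S 0"
  using subring_0[OF S] by (simp add: poly_over_def)

lemma poly_over_1: "poly_over S 1"
  using poly_over_const[OF subring_1[OF S]] by (simp add: one_pCons)

lemma poly_over_pCons_iff: "poly_over S (pCons c p) \<longleftrightarrow> c \<in> S \<and> poly_over S p"
  unfolding poly_over_def by (metis coeff_pCons_0 coeff_pCons_Suc nat.exhaust)

lemma poly_over_X: "poly_over S [:0, 1:]"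
  by (simp add: poly_over_pCons_iff poly_over_0 subring_0[OF S] subring_1[OF S])

lemma poly_over_add: "poly_over S p \<Longrightarrow> poly_over S q \<Longrightarrow> poly_over S (p + q)"
  using S by (simp add: poly_over_def subring_add)

lemma poly_over_uminus: "poly_over S p \<Longrightarrow> poly_over S (- p)"
  using S by (simp add: poly_over_def subring_uminus)

lemma poly_over_diff: "poly_over S p \<Longrightarrow> poly_over S q \<Longrightarrow> poly_over S (p - q)"
  using S by (simp add: poly_over_def subring_diff)

lemma poly_over_mult: "poly_over S p \<Longrightarrow> poly_over S q \<Longrightarrow> poly_over S (p * q)"
  using S unfolding poly_over_def coeff_mult by (auto intro!: subring_sum subring_mult)

lemma poly_over_smult: "c \<in> S \<Longrightarrow> poly_over S p \<Longrightarrow> poly_over S (smult c p)"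
  using S by (simp add: poly_over_def subring_mult)

lemma poly_over_pderiv: "poly_over S p \<Longrightarrow> poly_over S (pderiv p)"
  using S by (simp add: poly_over_def coeff_pderiv subring_mult subring_of_nat del: of_nat_Suc)

lemma poly_over_map_poly:
  "poly_over S p \<Longrightarrow> (\<And>x. x \<in> S \<Longrightarrow> g x \<in> S) \<Longrightarrow> g 0 = 0 \<Longrightarrow> poly_over S (map_poly g p)"
  by (simp add: poly_over_def coeff_map_poly)

lemma poly_in_subring: "poly_over S p \<Longrightarrow> u \<in> S \<Longrightarrow> poly p u \<in> S"
  using S unfolding poly_altdef poly_over_def
  by (auto intro!: subring_sum subring_mult subring_power)

lemma adjoin_subring: "is_subring (adjoin S u)"
  unfolding is_subring_def adjoin_def
proof (intro conjI ballI)
  show "0 \<in> {poly p u |p. poly_over S p}" "1 \<in> {poly p u |p. poly_over S p}"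
    using poly_over_0 poly_over_1 by force+
  fix x y assume "x \<in> {poly p u |p. poly_over S p}" "y \<in> {poly p u |p. poly_over S p}"
  then obtain p q where "poly_over S p" "poly_over S q" "x = poly p u" "y = poly q u" by blast
  then show "x + y \<in> {poly p u |p. poly_over S p}" "x * y \<in> {poly p u |p. poly_over S p}"
    using poly_over_add poly_over_mult by force+
next
  fix x assume "x \<in> {poly p u |p. poly_over S p}"
  then show "- x \<in> {poly p u |p. poly_over S p}" using poly_over_uminus by force
qed

lemma subset_adjoin: "S \<subseteq> adjoin S u"
  unfolding adjoin_def using poly_over_const by force

lemma var_in_adjoin: "u \<in> adjoin S u"
  unfolding adjoin_def using poly_over_X by force

end

lemma adjoin_least:
  fixes S :: "'a::idom set"
  assumes "is_subring T" "S \<subseteq> T" "u \<in> T"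
  shows "adjoin S u \<subseteq> T"
  using assms poly_in_subring[OF assms(1)] unfolding adjoin_def poly_over_def by blast

lemma derivation_closed: "is_derivation_on S \<delta> \<Longrightarrow> x \<in> S \<Longrightarrow> \<delta> x \<in> S"
  and derivation_add: "is_derivation_on S \<delta> \<Longrightarrow> x \<in> S \<Longrightarrow> y \<in> S \<Longrightarrow> \<delta> (x + y) = \<delta> x + \<delta> y"
  and derivation_mult:
    "is_derivation_on S \<delta> \<Longrightarrow> x \<in> S \<Longrightarrow> y \<in> S \<Longrightarrow> \<delta> (x * y) = x * \<delta> y + y * \<delta> x"
  unfolding is_derivation_on_def by blast+

context
  fixes S :: "'a::idom set" and \<delta> :: "'a \<Rightarrow> 'a"
  assumes S: "is_subring S" and \<delta>: "is_derivation_on S \<delta>"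
begin

lemma derivation_0: "\<delta> 0 = 0"
  using derivation_add[OF \<delta> subring_0[OF S] subring_0[OF S]]
  by (simp only: add_0_left add_cancel_right_right)

lemma derivation_1: "\<delta> 1 = 0"
  using derivation_mult[OF \<delta> subring_1[OF S] subring_1[OF S]]
  by (simp only: mult_1 add_cancel_right_right)

lemma derivation_sum: "(\<And>i. i \<in> I \<Longrightarrow> g i \<in> S) \<Longrightarrow> \<delta> (sum g I) = (\<Sum>i\<in>I. \<delta> (g i))"
  by (induction I rule: infinite_finite_induct)
    (auto simp: derivation_0 derivation_add[OF \<delta>] subring_sum[OF S])

lemma derivation_power_const: "c \<in> S \<Longrightarrow> \<delta> c = 0 \<Longrightarrow> \<delta> (c ^ n) = 0"
  by (induction n) (simp_all add: derivation_1 derivation_mult[OF \<delta>] subring_power[OF S])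

lemma derivation_mult_const: "c \<in> S \<Longrightarrow> \<delta> c = 0 \<Longrightarrow> x \<in> S \<Longrightarrow> \<delta> (c * x) = c * \<delta> x"
  by (simp add: derivation_mult[OF \<delta>])

lemma is_derivation_on_scaled: "c \<in> S \<Longrightarrow> is_derivation_on S (\<lambda>x. c * \<delta> x)"
  unfolding is_derivation_on_def
  by (simp add: derivation_closed[OF \<delta>] derivation_add[OF \<delta>] derivation_mult[OF \<delta>]
      subring_mult[OF S] algebra_simps)

lemma funpow_scaled_derivation:
  assumes "c \<in> S" "\<delta> c = 0" "x \<in> S"
  shows "((\<lambda>y. c * \<delta> y) ^^ n) x = c ^ n * (\<delta> ^^ n) x \<and> (\<delta> ^^ n) x \<in> S"
proof (induction n)
  case (Suc n)
  then show ?case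
    using assms derivation_mult_const[OF subring_power[OF S], of c n] derivation_power_const
    by (simp add: derivation_closed[OF \<delta>])
qed (use assms in simp)

lemma locally_nilpotent_on_scaled:
  "c \<in> S \<Longrightarrow> \<delta> c = 0 \<Longrightarrow> locally_nilpotent_on S \<delta> \<Longrightarrow> locally_nilpotent_on S (\<lambda>x. c * \<delta> x)"
  unfolding locally_nilpotent_on_def using funpow_scaled_derivation by fastforce

lemma map_poly_derivation_add:
  "poly_over S p \<Longrightarrow> poly_over S q \<Longrightarrow> map_poly \<delta> (p + q) = map_poly \<delta> p + map_poly \<delta> q"
  by (rule poly_eqI) (simp add: coeff_map_poly derivation_0 derivation_add[OF \<delta>] poly_over_def)

lemma map_poly_derivation_mult:
  "poly_over S p \<Longrightarrow> poly_over S q \<Longrightarrow> map_poly \<delta> (p * q) = p * map_poly \<delta> q + q * map_poly \<delta> p"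
proof (induction p rule: pCons_induct)
  case (pCons a p)
  have a: "a \<in> S" and p: "poly_over S p" using pCons.prems poly_over_pCons_iff[OF S] by auto
  have smult: "map_poly \<delta> (smult a q) = smult a (map_poly \<delta> q) + smult (\<delta> a) q"
    using a pCons.prems(2)
    by (intro poly_eqI) (simp add: coeff_map_poly derivation_0 derivation_mult[OF \<delta>] poly_over_def)
  have shift: "map_poly \<delta> (pCons 0 r) = pCons 0 (map_poly \<delta> r)" for r
    using map_poly_pCons[of \<delta> 0 r] derivation_0 by simp
  have "map_poly \<delta> (pCons a p * q) = map_poly \<delta> (smult a q) + map_poly \<delta> (pCons 0 (p * q))"
    using a p pCons.prems(2)
    by (simp add: map_poly_derivation_add poly_over_smult[OF S] poly_over_pCons_iff[OF S]
        poly_over_mult[OF S] subring_0[OF S])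
  also have "\<dots> = pCons a p * map_poly \<delta> q + q * map_poly \<delta> (pCons a p)"
    using pCons.IH[OF p pCons.prems(2)] derivation_0
    by (simp add: smult shift map_poly_pCons algebra_simps)
  finally show ?case .
qed simp

end

lemma is_derivation_on_zero: "is_subring S \<Longrightarrow> is_derivation_on S (\<lambda>_. 0)"
  unfolding is_derivation_on_def by (simp add: subring_0)

lemma funpow_fixes_0:
  fixes f :: "'a::zero \<Rightarrow> 'a"
  shows "f 0 = 0 \<Longrightarrow> (f ^^ n) 0 = 0"
  by (induction n) auto

lemma funpow_eq_0_mono:
  fixes f :: "'a::zero \<Rightarrow> 'a"
  assumes "f 0 = 0" "(f ^^ m) x = 0" "m \<le> n"
  shows "(f ^^ n) x = 0"
proof -
  have "(f ^^ n) x = (f ^^ (n - m)) ((f ^^ m) x)"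
    using assms(3) by (metis funpow_add le_add_diff_inverse2 o_apply)
  then show ?thesis using assms(1,2) funpow_fixes_0 by simp
qed

lemma map_poly_0_fun [simp]: "map_poly (\<lambda>_. 0) p = 0"
  by (intro poly_eqI) (simp add: coeff_map_poly)

lemma funpow_pderiv_eq_0: "degree p < n \<Longrightarrow> (pderiv ^^ n) p = 0"
proof (induction n arbitrary: p)
  case (Suc n)
  have "degree (pderiv p) \<le> degree p - 1"
    by (rule degree_le) (simp add: coeff_eq_0 coeff_pderiv)
  moreover have "degree p = 0 \<Longrightarrow> pderiv p = 0"
    by (metis degree_eq_zeroE pderiv_singleton)
  ultimately have "pderiv p = 0 \<or> degree (pderiv p) < n"
    using Suc.prems by linarith
  then show ?case
    using Suc.IH funpow_fixes_0[of pderiv n] by (auto simp: funpow_Suc_right simp del: funpow.simps)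
qed simp

section \<open>Extending a derivation to a transcendental element\<close>

locale transcendental_extension =
  fixes S :: "'a::idom set" and u :: 'a
  assumes subring: "is_subring S"
    and transcendental: "poly_over S p \<Longrightarrow> poly p u = 0 \<Longrightarrow> p = 0"
begin

definition poly_rep :: "'a \<Rightarrow> 'a poly" where
  "poly_rep z = (SOME p. poly_over S p \<and> z = poly p u)"

lemma poly_rep_poly: "poly_over S p \<Longrightarrow> poly_rep (poly p u) = p"
proof -
  assume p: "poly_over S p"
  have "poly_over S (poly_rep (poly p u)) \<and> poly p u = poly (poly_rep (poly p u)) u"
    unfolding poly_rep_def by (rule someI[of _ p]) (use p in auto)
  then show ?thesis
    using p transcendental[of "p - poly_rep (poly p u)"] poly_over_diff[OF subring] by auto
qed

definition extend_derivation :: "('a \<Rightarrow> 'a) \<Rightarrow> 'a \<Rightarrow> 'a \<Rightarrow> 'a" where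
  "extend_derivation \<delta> c z = poly (map_poly \<delta> (poly_rep z)) u + poly (pderiv (poly_rep z)) u * c"

lemma extend_derivation_poly:
  "poly_over S p \<Longrightarrow> extend_derivation \<delta> c (poly p u) = poly (map_poly \<delta> p) u + poly (pderiv p) u * c"
  by (simp add: extend_derivation_def poly_rep_poly)

context
  fixes \<delta> :: "'a \<Rightarrow> 'a"
  assumes \<delta>: "is_derivation_on S \<delta>"
begin

lemma is_derivation_on_extend:
  assumes "c \<in> adjoin S u"
  shows "is_derivation_on (adjoin S u) (extend_derivation \<delta> c)"
  unfolding is_derivation_on_def
proof (intro conjI ballI)
  obtain r where r: "poly_over S r" "c = poly r u" using assms unfolding adjoin_def by blast
  fix x assume "x \<in> adjoin S u"
  then obtain p where p: "poly_over S p" "x = poly p u" unfolding adjoin_def by blast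
  have "extend_derivation \<delta> c x = poly (map_poly \<delta> p + pderiv p * r) u"
    using p r by (simp add: extend_derivation_poly)
  moreover have "poly_over S (map_poly \<delta> p + pderiv p * r)"
    using p r subring \<delta>
    by (auto intro!: poly_over_add poly_over_mult poly_over_pderiv poly_over_map_poly
        simp: derivation_closed[OF \<delta>] derivation_0)
  ultimately show "extend_derivation \<delta> c x \<in> adjoin S u" unfolding adjoin_def by blast
next
  fix x y assume "x \<in> adjoin S u" "y \<in> adjoin S u"
  then obtain p q where pq: "poly_over S p" "x = poly p u" "poly_over S q" "y = poly q u"
    unfolding adjoin_def by blast
  have sum: "poly_over S (p + q)" and prod: "poly_over S (p * q)"
    using pq subring by (auto intro: poly_over_add poly_over_mult)
  show "extend_derivation \<delta> c (x + y) = extend_derivation \<delta> c x + extend_derivation \<delta> c y"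
    using extend_derivation_poly[OF sum] pq
    by (simp add: extend_derivation_poly map_poly_derivation_add[OF subring \<delta>] pderiv_add
        algebra_simps)
  show "extend_derivation \<delta> c (x * y) = x * extend_derivation \<delta> c y + y * extend_derivation \<delta> c x"
    using extend_derivation_poly[OF prod] pq
    by (simp add: extend_derivation_poly map_poly_derivation_mult[OF subring \<delta>] pderiv_mult
        algebra_simps)
qed

lemma extend_derivation_base: "s \<in> S \<Longrightarrow> extend_derivation \<delta> c s = \<delta> s"
  using extend_derivation_poly[OF poly_over_const[OF subring], of s \<delta> c]
    map_poly_pCons[of \<delta> s 0] derivation_0[OF subring \<delta>] by simp

lemma extend_derivation_var: "extend_derivation \<delta> c u = c"
  using extend_derivation_poly[OF poly_over_X[OF subring], of \<delta> c]
    map_poly_pCons[of \<delta>] derivation_0[OF subring \<delta>] derivation_1[OF subring \<delta>]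
  by (simp add: pderiv_pCons)

lemma funpow_extend_derivation_0:
  "poly_over S p \<Longrightarrow>
    (extend_derivation \<delta> 0 ^^ n) (poly p u) = poly (map_poly (\<delta> ^^ n) p) u \<and>
    poly_over S (map_poly (\<delta> ^^ n) p)"
proof (induction n)
  case (Suc n)
  have \<delta>0: "\<delta> 0 = 0" and \<delta>n0: "(\<delta> ^^ n) 0 = 0"
    using derivation_0[OF subring \<delta>] funpow_fixes_0 by blast+
  let ?q = "map_poly (\<delta> ^^ n) p"
  have q: "poly_over S ?q" using Suc by blast
  have comp: "map_poly \<delta> ?q = map_poly (\<delta> ^^ Suc n) p"
    using map_poly_map_poly[of \<delta> "\<delta> ^^ n" p] \<delta>0 \<delta>n0 by simp
  have "poly_over S (map_poly \<delta> ?q)"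
    by (rule poly_over_map_poly[where g = \<delta>, OF subring q _ \<delta>0]) (rule derivation_closed[OF \<delta>])
  then show ?case using Suc comp extend_derivation_poly[OF q] by (simp add: o_def)
qed (simp add: map_poly_idI)

lemma locally_nilpotent_on_extend_0:
  assumes nil: "locally_nilpotent_on S \<delta>"
  shows "locally_nilpotent_on (adjoin S u) (extend_derivation \<delta> 0)"
  unfolding locally_nilpotent_on_def
proof
  fix z assume "z \<in> adjoin S u"
  then obtain p where p: "poly_over S p" "z = poly p u" unfolding adjoin_def by blast
  have "\<forall>i. \<exists>n. (\<delta> ^^ n) (coeff p i) = 0"
    using nil p(1) unfolding locally_nilpotent_on_def poly_over_def by blast
  then obtain k where k: "\<And>i. (\<delta> ^^ k i) (coeff p i) = 0" by metis
  have \<delta>0: "\<delta> 0 = 0" by (rule derivation_0[OF subring \<delta>])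
  define N where "N = Max (k ` {..degree p})"
  have "coeff (map_poly (\<delta> ^^ N) p) i = 0" for i
  proof (cases "i \<le> degree p")
    case True
    then have "k i \<le> N" unfolding N_def by (intro Max_ge) auto
    then have "(\<delta> ^^ N) (coeff p i) = 0" by (rule funpow_eq_0_mono[OF \<delta>0 k])
    then show ?thesis by (simp add: coeff_map_poly funpow_fixes_0[of \<delta>, OF \<delta>0])
  next
    case False
    then show ?thesis by (simp add: coeff_map_poly coeff_eq_0 funpow_fixes_0[of \<delta>, OF \<delta>0])
  qed
  then have "map_poly (\<delta> ^^ N) p = 0" by (intro poly_eqI) simp
  then show "\<exists>n. (extend_derivation \<delta> 0 ^^ n) z = 0"
    using funpow_extend_derivation_0[OF p(1), of N] p(2) by auto
qed

end

abbreviation partial_derivative :: "'a \<Rightarrow> 'a" where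
  "partial_derivative \<equiv> extend_derivation (\<lambda>_. 0) 1"

lemma is_derivation_on_partial_derivative: "is_derivation_on (adjoin S u) partial_derivative"
  by (rule is_derivation_on_extend[OF is_derivation_on_zero[OF subring]])
    (rule subsetD[OF subset_adjoin[OF subring] subring_1[OF subring]])

lemma partial_derivative_var: "partial_derivative u = 1"
  by (rule extend_derivation_var[OF is_derivation_on_zero[OF subring]])

lemma funpow_partial_derivative:
  assumes "poly_over S p"
  shows "(partial_derivative ^^ n) (poly p u) = poly ((pderiv ^^ n) p) u"
proof -
  have "(partial_derivative ^^ n) (poly p u) = poly ((pderiv ^^ n) p) u \<and>
    poly_over S ((pderiv ^^ n) p)"
  proof (induction n)
    case (Suc n)
    let ?q = "(pderiv ^^ n) p"
    have "partial_derivative (poly ?q u) = poly (pderiv ?q) u"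
      using extend_derivation_poly[of ?q] Suc by simp
    then show ?case using Suc poly_over_pderiv[OF subring] by simp
  qed (use assms in simp)
  then show ?thesis ..
qed

lemma locally_nilpotent_on_partial_derivative:
  "locally_nilpotent_on (adjoin S u) partial_derivative"
  unfolding locally_nilpotent_on_def
proof
  fix z assume "z \<in> adjoin S u"
  then obtain p where p: "poly_over S p" "z = poly p u" unfolding adjoin_def by blast
  have "(partial_derivative ^^ Suc (degree p)) z = 0"
    using funpow_partial_derivative[OF p(1), of "Suc (degree p)"]
      funpow_pderiv_eq_0[of p "Suc (degree p)"] p(2)
    by (simp del: funpow.simps)
  then show "\<exists>n. (partial_derivative ^^ n) z = 0" ..
qed

text \<open>Units of \<open>S[u]\<close> lie in \<open>S\<close>, hence are killed by \<open>\<partial>/\<partial>u\<close>.\<close>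
lemma partial_derivative_unit:
  assumes "z \<in> adjoin S u" "z' \<in> adjoin S u" "z * z' = 1"
  shows "partial_derivative z = 0"
proof -
  obtain p q where pq: "poly_over S p" "z = poly p u" "poly_over S q" "z' = poly q u"
    using assms(1,2) unfolding adjoin_def by blast
  have "poly (p * q - 1) u = 0" using pq assms(3) by simp
  then have "p * q = 1"
    using transcendental
      poly_over_diff[OF subring poly_over_mult[OF subring pq(1,3)] poly_over_1[OF subring]]
    by fastforce
  then have "degree p = 0" using degree_mult_eq[of p q] by (cases "p = 0 \<or> q = 0") auto
  then have "pderiv p = 0" by (metis degree_eq_zeroE pderiv_singleton)
  then show ?thesis using extend_derivation_poly[OF pq(1)] pq(2) by simp
qed

end

section \<open>Extending a derivation to a localization\<close>

definition localize :: "'a::field set \<Rightarrow> 'a \<Rightarrow> 'a set" where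
  "localize S s = {y / s ^ n | y n. y \<in> S}"

lemma localize_least:
  assumes "is_subring T" "S \<subseteq> T" "1 / s \<in> T"
  shows "localize S s \<subseteq> T"
proof
  fix z assume "z \<in> localize S s"
  then obtain y n where "y \<in> S" "z = y * (1 / s) ^ n" unfolding localize_def
    by (auto simp: power_one_over)
  then show "z \<in> T" using assms subring_mult[OF assms(1)] subring_power[OF assms(1)] by blast
qed

locale localization =
  fixes S :: "'a::field set" and s :: 'a
  assumes subring: "is_subring S" and s_in: "s \<in> S" and s_nonzero: "s \<noteq> 0"
begin

lemma add_frac: "y / s ^ m + y' / s ^ n = (y * s ^ n + y' * s ^ m) / s ^ (m + n)"
  and mult_frac: "(y / s ^ m) * (y' / s ^ n) = (y * y') / s ^ (m + n)"
  using s_nonzero by (simp_all add: divide_simps power_add algebra_simps)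

lemma localize_subring: "is_subring (localize S s)"
  unfolding is_subring_def
proof (intro conjI ballI)
  have "0 = 0 / s ^ 0" "1 = 1 / s ^ 0" by simp_all
  then show "0 \<in> localize S s" "1 \<in> localize S s"
    unfolding localize_def using subring_0[OF subring] subring_1[OF subring] by blast+
  fix x z assume "x \<in> localize S s" "z \<in> localize S s"
  then obtain a m b n where ab: "a \<in> S" "b \<in> S" "x = a / s ^ m" "z = b / s ^ n"
    unfolding localize_def by blast
  have "a * s ^ n + b * s ^ m \<in> S" "a * b \<in> S"
    by (intro subring_add[OF subring] subring_mult[OF subring] subring_power[OF subring] ab s_in)+
  then show "x + z \<in> localize S s" "x * z \<in> localize S s"
    unfolding ab add_frac mult_frac localize_def by blast+
next
  fix x assume "x \<in> localize S s"
  then obtain a n where "a \<in> S" "x = a / s ^ n" unfolding localize_def by blast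
  then have "- a \<in> S" "- x = (- a) / s ^ n" by (simp_all add: subring_uminus[OF subring])
  then show "- x \<in> localize S s" unfolding localize_def by blast
qed

lemma subset_localize: "S \<subseteq> localize S s"
proof
  fix y assume "y \<in> S"
  moreover have "y = y / s ^ 0" by simp
  ultimately show "y \<in> localize S s" unfolding localize_def by blast
qed

lemma inverse_in_localize: "1 / s \<in> localize S s"
proof -
  have "1 / s = 1 / s ^ 1" by simp
  then show ?thesis unfolding localize_def using subring_1[OF subring] by blast
qed

definition frac_rep :: "'a \<Rightarrow> 'a \<times> nat" where
  "frac_rep z = (SOME yn. fst yn \<in> S \<and> z = fst yn / s ^ snd yn)"

definition localize_derivation :: "('a \<Rightarrow> 'a) \<Rightarrow> 'a \<Rightarrow> 'a" where
  "localize_derivation \<delta> z = \<delta> (fst (frac_rep z)) / s ^ snd (frac_rep z)"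

context
  fixes \<delta> :: "'a \<Rightarrow> 'a"
  assumes \<delta>: "is_derivation_on S \<delta>" and \<delta>s: "\<delta> s = 0"
begin

lemma localize_derivation_frac:
  assumes y: "y \<in> S"
  shows "localize_derivation \<delta> (y / s ^ n) = \<delta> y / s ^ n"
proof -
  obtain y' n' where rep: "frac_rep (y / s ^ n) = (y', n')" by fastforce
  have "fst (y', n') \<in> S \<and> y / s ^ n = fst (y', n') / s ^ snd (y', n')"
    unfolding rep[symmetric] frac_rep_def by (rule someI[of _ "(y, n)"]) (use y in auto)
  then have y': "y' \<in> S" and "y * s ^ n' = y' * s ^ n"
    using s_nonzero by (auto simp: divide_simps)
  then have "\<delta> (y * s ^ n') = \<delta> (y' * s ^ n)" by simp
  then have "\<delta> y * s ^ n' = \<delta> y' * s ^ n"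
    using y y' s_in
    by (simp add: derivation_mult[OF \<delta>] derivation_power_const[OF subring \<delta> s_in \<delta>s]
        subring_power[OF subring] mult.commute)
  then show ?thesis
    unfolding localize_derivation_def rep using s_nonzero by (simp add: divide_simps)
qed

lemma is_derivation_on_localize: "is_derivation_on (localize S s) (localize_derivation \<delta>)"
  unfolding is_derivation_on_def
proof (intro conjI ballI)
  fix x assume "x \<in> localize S s"
  then obtain a m where "a \<in> S" "x = a / s ^ m" unfolding localize_def by blast
  then show "localize_derivation \<delta> x \<in> localize S s"
    using localize_derivation_frac derivation_closed[OF \<delta>] unfolding localize_def by auto
next
  fix x z assume "x \<in> localize S s" "z \<in> localize S s"
  then obtain a m b n where ab: "a \<in> S" "b \<in> S" "x = a / s ^ m" "z = b / s ^ n"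
    unfolding localize_def by blast
  have powers: "s ^ m \<in> S" "s ^ n \<in> S" by (intro subring_power[OF subring] s_in)+
  have sum: "a * s ^ n + b * s ^ m \<in> S"
    by (intro subring_add[OF subring] subring_mult[OF subring] ab powers)
  show "localize_derivation \<delta> (x + z) = localize_derivation \<delta> x + localize_derivation \<delta> z"
    unfolding ab add_frac localize_derivation_frac[OF sum] localize_derivation_frac[OF ab(1)]
      localize_derivation_frac[OF ab(2)]
    using ab powers
    by (simp add: derivation_add[OF \<delta>] derivation_mult[OF \<delta>]
        derivation_power_const[OF subring \<delta> s_in \<delta>s] subring_mult[OF subring])
  show "localize_derivation \<delta> (x * z) = x * localize_derivation \<delta> z + z * localize_derivation \<delta> x"
    unfolding ab mult_frac localize_derivation_frac[OF subring_mult[OF subring ab(1,2)]]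
      localize_derivation_frac[OF ab(1)] localize_derivation_frac[OF ab(2)]
    using ab s_nonzero
    by (simp add: derivation_mult[OF \<delta>] divide_simps power_add algebra_simps)
qed

lemma locally_nilpotent_on_localize:
  assumes "locally_nilpotent_on S \<delta>"
  shows "locally_nilpotent_on (localize S s) (localize_derivation \<delta>)"
  unfolding locally_nilpotent_on_def
proof
  fix z assume "z \<in> localize S s"
  then obtain y n where y: "y \<in> S" "z = y / s ^ n" unfolding localize_def by blast
  have "(localize_derivation \<delta> ^^ k) (y / s ^ n) = (\<delta> ^^ k) y / s ^ n \<and> (\<delta> ^^ k) y \<in> S" for k
    by (induction k) (auto simp: localize_derivation_frac derivation_closed[OF \<delta>] y(1))
  then show "\<exists>k. (localize_derivation \<delta> ^^ k) z = 0"
    using assms y unfolding locally_nilpotent_on_def by fastforce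
qed

end

end

section \<open>Dickson's lemma\<close>

lemma no_decreasing_on_infinite:
  fixes Y :: "nat set" and g :: "nat \<Rightarrow> nat"
  assumes "infinite Y" "\<And>i j. i \<in> Y \<Longrightarrow> j \<in> Y \<Longrightarrow> i < j \<Longrightarrow> g j < g i"
  shows False
proof -
  let ?e = "enumerate Y"
  have "g (?e n) + n \<le> g (?e 0)" for n
  proof (induction n)
    case (Suc n)
    have "g (?e (Suc n)) < g (?e n)"
      using assms enumerate_in_set[OF assms(1)] enumerate_step[OF assms(1)] by blast
    then show ?case using Suc by simp
  qed simp
  from this[of "Suc (g (?e 0))"] show False by simp
qed

lemma dickson_subsequence:
  fixes s :: "nat \<Rightarrow> 'x \<Rightarrow> nat"
  assumes "finite H"
  shows "\<exists>Y. infinite Y \<and> (\<forall>i\<in>Y. \<forall>j\<in>Y. i < j \<longrightarrow> (\<forall>h\<in>H. s i h \<le> s j h))"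
  using assms
proof (induction H rule: finite_induct)
  case empty
  then show ?case by (intro exI[of _ UNIV]) auto
next
  case (insert h H)
  then obtain Y0 where Y0: "infinite Y0" "\<forall>i\<in>Y0. \<forall>j\<in>Y0. i < j \<longrightarrow> (\<forall>h\<in>H. s i h \<le> s j h)"
    by blast
  define colour where "colour X = (if s (Min X) h \<le> s (Max X) h then 0 else (1::nat))"
    for X :: "nat set"
  have "\<forall>x\<in>Y0. \<forall>y\<in>Y0. x \<noteq> y \<longrightarrow> colour {x, y} < 2" unfolding colour_def by auto
  from Ramsey2[OF Y0(1) this] obtain Y t where Y: "Y \<subseteq> Y0" "infinite Y" "t < 2"
    "\<forall>x\<in>Y. \<forall>y\<in>Y. x \<noteq> y \<longrightarrow> colour {x, y} = t" by blast
  have pair: "i < j \<Longrightarrow> Min {i, j} = i \<and> Max {i, j} = j" for i j :: nat by auto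
  show ?case
  proof (cases "t = 0")
    case True
    have "\<forall>i\<in>Y. \<forall>j\<in>Y. i < j \<longrightarrow> (\<forall>h'\<in>insert h H. s i h' \<le> s j h')"
    proof (intro ballI impI)
      fix i j h' assume ij: "i \<in> Y" "j \<in> Y" "i < j" and h': "h' \<in> insert h H"
      have "colour {i, j} = 0" using Y(4) ij True by auto
      then have "s i h \<le> s j h" using pair[OF ij(3)] unfolding colour_def by (auto split: if_splits)
      then show "s i h' \<le> s j h'" using h' Y0(2) Y(1) ij by auto
    qed
    then show ?thesis using Y(2) by blast
  next
    case False
    have "s j h < s i h" if ij: "i \<in> Y" "j \<in> Y" "i < j" for i j
    proof -
      have "colour {i, j} = 1" using Y(3,4) ij False by auto
      then show ?thesis using pair[OF ij(3)] unfolding colour_def by (auto split: if_splits)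
    qed
    then show ?thesis using no_decreasing_on_infinite[OF Y(2), of "\<lambda>i. s i h"] by blast
  qed
qed

lemma finite_antichain:
  fixes X :: "('x \<Rightarrow> nat) set"
  assumes "finite H" "\<And>\<alpha> x. \<alpha> \<in> X \<Longrightarrow> x \<notin> H \<Longrightarrow> \<alpha> x = 0"
    "\<And>\<alpha> \<beta>. \<alpha> \<in> X \<Longrightarrow> \<beta> \<in> X \<Longrightarrow> (\<forall>x. \<alpha> x \<le> \<beta> x) \<Longrightarrow> \<alpha> = \<beta>"
  shows "finite X"
proof (rule ccontr)
  assume "infinite X"
  then obtain s :: "nat \<Rightarrow> ('x \<Rightarrow> nat)" where s: "inj s" "range s \<subseteq> X"
    using infinite_countable_subset by blast
  obtain Y where Y: "infinite Y" "\<forall>i\<in>Y. \<forall>j\<in>Y. i < j \<longrightarrow> (\<forall>h\<in>H. s i h \<le> s j h)"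
    using dickson_subsequence[OF assms(1)] by blast
  obtain i j where ij: "i \<in> Y" "j \<in> Y" "i < j"
    using Y(1) by (metis finite.emptyI ex_in_conv infinite_nat_iff_unbounded)
  have "s i x \<le> s j x" for x
  proof (cases "x \<in> H")
    case True
    then show ?thesis using Y(2) ij by blast
  next
    case False
    then have "s i x = 0" using assms(2) s(2) by blast
    then show ?thesis by simp
  qed
  then have "s i = s j" using assms(3) s(2) by blast
  then show False using s(1) ij(3) by (metis inj_eq less_irrefl)
qed

lemma nsm_add: "nsm (m + n) g = nsm m g + nsm n g"
  by (induction m) (auto simp: algebra_simps)

lemma nsm_diff: "n \<le> m \<Longrightarrow> nsm m g - nsm n g = nsm (m - n) g"
  using nsm_add[of "m - n" n g] by simp

lemma infinite_order_nonzero: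
  assumes "infinite_order d"
  shows "d \<noteq> 0"
proof -
  have "nsm (Suc 0) d \<noteq> 0" using assms zero_less_Suc unfolding infinite_order_def by blast
  then show ?thesis by simp
qed

lemma nsm_neq_if_less: "infinite_order d \<Longrightarrow> m < n \<Longrightarrow> nsm m d \<noteq> nsm n d"
  unfolding infinite_order_def using nsm_diff[of m n d]
    by (metis less_imp_le right_minus_eq zero_less_diff)

lemma nsm_inj: "infinite_order d \<Longrightarrow> nsm m d = nsm n d \<Longrightarrow> m = n"
  using nsm_neq_if_less[of d m n] nsm_neq_if_less[of d n m] by (metis linorder_neqE_nat)

lemma cyc_iff_diff: "g \<in> cyc d \<longleftrightarrow> (\<exists>m n. g = nsm m d - nsm n d)"
proof
  assume "g \<in> cyc d"
  then obtain n where "g = nsm n d - nsm 0 d \<or> g = nsm 0 d - nsm n d" unfolding cyc_def by auto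
  then show "\<exists>m n. g = nsm m d - nsm n d" by blast
next
  assume "\<exists>m n. g = nsm m d - nsm n d"
  then obtain m n where g: "g = nsm m d - nsm n d" by blast
  show "g \<in> cyc d"
  proof (cases "n \<le> m")
    case True
    then show ?thesis using g nsm_diff unfolding cyc_def by auto
  next
    case False
    then have "nsm n d = nsm m d + nsm (n - m) d" using nsm_add[of m "n - m" d] by simp
    then have "g = - nsm (n - m) d" using g by simp
    then show ?thesis unfolding cyc_def by auto
  qed
qed

lemma nsm_in_cyc: "nsm n d \<in> cyc d"
  unfolding cyc_def by blast

lemma cyc_add:
  assumes "g \<in> cyc d" "h \<in> cyc d"
  shows "g + h \<in> cyc d"
proof -
  obtain a b m n where "g = nsm a d - nsm b d" "h = nsm m d - nsm n d"
    using assms unfolding cyc_iff_diff by blast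
  then have "g + h = nsm (a + m) d - nsm (b + n) d"
    by (simp only: nsm_add) (simp add: algebra_simps)
  then show ?thesis unfolding cyc_iff_diff by blast
qed

lemma cyc_diff:
  assumes "g \<in> cyc d" "h \<in> cyc d"
  shows "g - h \<in> cyc d"
proof -
  obtain a b m n where "g = nsm a d - nsm b d" "h = nsm m d - nsm n d"
    using assms unfolding cyc_iff_diff by blast
  then have "g - h = nsm (a + n) d - nsm (b + m) d"
    by (simp only: nsm_add) (simp add: algebra_simps)
  then show ?thesis unfolding cyc_iff_diff by blast
qed

locale graded_domain =
  fixes Bg :: "'g::ab_group_add \<Rightarrow> 'b::idom set"
  assumes grading: "is_grading Bg"
begin

lemma grade_0 [simp]: "0 \<in> Bg i"
  and grade_add: "x \<in> Bg i \<Longrightarrow> y \<in> Bg i \<Longrightarrow> x + y \<in> Bg i"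
  and grade_uminus: "x \<in> Bg i \<Longrightarrow> - x \<in> Bg i"
  and grade_mult: "x \<in> Bg i \<Longrightarrow> y \<in> Bg j \<Longrightarrow> x * y \<in> Bg (i + j)"
  and homogeneous_decomposition:
    "\<exists>!c. finite {i. c i \<noteq> 0} \<and> (\<forall>i. c i \<in> Bg i) \<and> b = (\<Sum>i\<in>{i. c i \<noteq> 0}. c i)"
  using grading unfolding is_grading_def by blast+

definition hcomp :: "'b \<Rightarrow> 'g \<Rightarrow> 'b" where
  "hcomp b = (THE c. finite {i. c i \<noteq> 0} \<and> (\<forall>i. c i \<in> Bg i) \<and> b = (\<Sum>i\<in>{i. c i \<noteq> 0}. c i))"

lemma finite_hcomp_support: "finite {i. hcomp b i \<noteq> 0}"
  and hcomp_in_grade: "hcomp b i \<in> Bg i"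
  and sum_hcomp: "(\<Sum>i\<in>{i. hcomp b i \<noteq> 0}. hcomp b i) = b"
proof -
  have "finite {i. hcomp b i \<noteq> 0} \<and> (\<forall>i. hcomp b i \<in> Bg i) \<and> b = (\<Sum>i\<in>{i. hcomp b i \<noteq> 0}. hcomp b i)"
    unfolding hcomp_def by (rule theI'[OF homogeneous_decomposition])
  then show "finite {i. hcomp b i \<noteq> 0}" "hcomp b i \<in> Bg i" "(\<Sum>i\<in>{i. hcomp b i \<noteq> 0}. hcomp b i) = b"
    by auto
qed

lemma sum_hcomp_superset:
  assumes "finite J" "{i. hcomp b i \<noteq> 0} \<subseteq> J"
  shows "(\<Sum>i\<in>J. hcomp b i) = b"
  using sum.mono_neutral_left[OF assms, of "hcomp b"] sum_hcomp[of b] by simp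

lemma hcomp_eqI:
  assumes "finite J" "\<And>i. i \<notin> J \<Longrightarrow> c i = 0" "\<And>i. c i \<in> Bg i" "b = (\<Sum>i\<in>J. c i)"
  shows "hcomp b = c"
proof -
  have supp: "{i. c i \<noteq> 0} \<subseteq> J" using assms(2) by blast
  then have fin: "finite {i. c i \<noteq> 0}" using assms(1) by (rule finite_subset)
  have "b = (\<Sum>i\<in>{i. c i \<noteq> 0}. c i)"
    using sum.mono_neutral_left[OF assms(1) supp, of c] assms(4) by simp
  then have "finite {i. c i \<noteq> 0} \<and> (\<forall>i. c i \<in> Bg i) \<and> b = (\<Sum>i\<in>{i. c i \<noteq> 0}. c i)"
    using fin assms(3) by blast
  moreover have "finite {i. hcomp b i \<noteq> 0} \<and> (\<forall>i. hcomp b i \<in> Bg i) \<and>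
      b = (\<Sum>i\<in>{i. hcomp b i \<noteq> 0}. hcomp b i)"
    using finite_hcomp_support hcomp_in_grade sum_hcomp by auto
  ultimately show ?thesis using homogeneous_decomposition[of b] by blast
qed

lemma hcomp_homogeneous: "x \<in> Bg g \<Longrightarrow> hcomp x = (\<lambda>i. if i = g then x else 0)"
  by (rule hcomp_eqI[where J = "{g}"]) auto

lemma hcomp_0: "hcomp 0 = (\<lambda>i. 0)"
  using hcomp_homogeneous[OF grade_0[of 0]] by simp

lemma hcomp_add: "hcomp (x + y) = (\<lambda>i. hcomp x i + hcomp y i)"
proof (rule hcomp_eqI)
  let ?J = "{i. hcomp x i \<noteq> 0} \<union> {i. hcomp y i \<noteq> 0}"
  show "finite ?J" using finite_hcomp_support by auto
  show "\<And>i. i \<notin> ?J \<Longrightarrow> hcomp x i + hcomp y i = 0" by auto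
  show "\<And>i. hcomp x i + hcomp y i \<in> Bg i" by (intro grade_add hcomp_in_grade)
  have "x = (\<Sum>i\<in>?J. hcomp x i)" "y = (\<Sum>i\<in>?J. hcomp y i)"
    using sum_hcomp_superset finite_hcomp_support by auto
  then show "x + y = (\<Sum>i\<in>?J. hcomp x i + hcomp y i)" by (simp add: sum.distrib)
qed

lemma hcomp_uminus: "hcomp (- x) = (\<lambda>i. - hcomp x i)"
proof (rule hcomp_eqI)
  show "finite {i. hcomp x i \<noteq> 0}" by (rule finite_hcomp_support)
  show "\<And>i. - hcomp x i \<in> Bg i" by (intro grade_uminus hcomp_in_grade)
  show "- x = (\<Sum>i\<in>{i. hcomp x i \<noteq> 0}. - hcomp x i)"
    using sum_hcomp[of x] by (simp add: sum_negf)
qed auto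

lemma hcomp_diff: "hcomp (x - y) = (\<lambda>i. hcomp x i - hcomp y i)"
  using hcomp_add[of x "- y"] hcomp_uminus[of y] by simp

lemma hcomp_sum: "hcomp (sum x A) i = (\<Sum>a\<in>A. hcomp (x a) i)"
  by (induction A rule: infinite_finite_induct) (auto simp: hcomp_0 hcomp_add)

lemma hcomp_sum_list: "hcomp (sum_list xs) i = (\<Sum>x\<leftarrow>xs. hcomp x i)"
  by (induction xs) (auto simp: hcomp_0 hcomp_add)

lemma eq_0_if_hcomp_eq_0: "(\<And>i. hcomp b i = 0) \<Longrightarrow> b = 0"
  using sum_hcomp[of b] by simp

lemma in_grade_if_hcomp: "(\<And>i. i \<noteq> g \<Longrightarrow> hcomp b i = 0) \<Longrightarrow> b \<in> Bg g"
  using sum_hcomp_superset[of "{g}" b] hcomp_in_grade[of b g] by fastforce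

lemma homogeneous_unique_degree:
  assumes "x \<in> Bg g" "x \<in> Bg h" "x \<noteq> 0"
  shows "g = h"
proof -
  have "hcomp x g = x" using hcomp_homogeneous[OF assms(1)] by simp
  moreover have "hcomp x g = (if g = h then x else 0)" using hcomp_homogeneous[OF assms(2)] by simp
  ultimately show ?thesis using assms(3) by (simp split: if_splits)
qed

lemma hcomp_mult_homogeneous:
  assumes "x \<in> Bg g"
  shows "hcomp (x * y) h = x * hcomp y (h - g)"
proof -
  let ?J = "{i. hcomp y i \<noteq> 0}"
  have "x * y = x * (\<Sum>j\<in>?J. hcomp y j)" using sum_hcomp[of y] by simp
  also have "\<dots> = (\<Sum>j\<in>?J. x * hcomp y j)" by (rule sum_distrib_left)
  finally have "hcomp (x * y) h = (\<Sum>j\<in>?J. hcomp (x * hcomp y j) h)" by (simp add: hcomp_sum)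
  also have "\<dots> = (\<Sum>j\<in>?J. if j = h - g then x * hcomp y j else 0)"
    by (rule sum.cong)
      (auto simp: hcomp_homogeneous[OF grade_mult[OF assms hcomp_in_grade]] algebra_simps)
  also have "\<dots> = x * hcomp y (h - g)"
    using finite_hcomp_support[of y] by (simp add: sum.delta)
  finally show ?thesis .
qed

lemma homogeneous_sum_eq_0:
  assumes "finite I" "inj_on g I" "\<And>i. i \<in> I \<Longrightarrow> x i \<in> Bg (g i)" "(\<Sum>i\<in>I. x i) = 0" "j \<in> I"
  shows "x j = 0"
proof -
  have "0 = (\<Sum>i\<in>I. hcomp (x i) (g j))"
    using assms(4) hcomp_sum[of x I "g j"] hcomp_0 by simp
  also have "\<dots> = (\<Sum>i\<in>I. if i = j then x i else 0)"
  proof (rule sum.cong)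
    fix i assume i: "i \<in> I"
    have "hcomp (x i) = (\<lambda>k. if k = g i then x i else 0)"
      by (rule hcomp_homogeneous[OF assms(3)[OF i]])
    then show "hcomp (x i) (g j) = (if i = j then x i else 0)"
      using assms(2,5) i unfolding inj_on_def by auto
  qed simp
  also have "\<dots> = x j" using assms(1,5) by simp
  finally show ?thesis by simp
qed

lemma homogeneous_cancel:
  assumes "x \<in> Bg g" "x \<noteq> 0" "x * y \<in> Bg e"
  shows "y \<in> Bg (e - g)"
proof (rule in_grade_if_hcomp)
  fix h assume "h \<noteq> e - g"
  then have "hcomp (x * y) (h + g) = 0"
    using hcomp_homogeneous[OF assms(3)] by (auto simp: algebra_simps)
  then show "hcomp y h = 0"
    using hcomp_mult_homogeneous[OF assms(1), of y "h + g"] assms(2) by simp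
qed

lemma one_in_grade_0: "1 \<in> Bg 0"
proof (rule in_grade_if_hcomp)
  obtain j where j: "hcomp 1 j \<noteq> 0" using eq_0_if_hcomp_eq_0[of 1] by auto
  fix i :: 'g assume "i \<noteq> 0"
  have "hcomp 1 j * hcomp 1 i = hcomp (hcomp 1 j * 1) (i + j)"
    using hcomp_mult_homogeneous[OF hcomp_in_grade, of 1 j 1 "i + j"] by simp
  also have "\<dots> = 0" using hcomp_homogeneous[OF hcomp_in_grade, of 1 j] \<open>i \<noteq> 0\<close> by simp
  finally show "hcomp 1 i = 0" using j by simp
qed

lemma power_in_grade: "x \<in> Bg g \<Longrightarrow> x ^ n \<in> Bg (nsm n g)"
proof (induction n)
  case (Suc n)
  then show ?case using grade_mult[OF Suc.prems Suc.IH[OF Suc.prems]]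
    by (simp only: power_Suc nsm.simps)
qed (simp add: one_in_grade_0)

lemma prod_in_grade: "(\<And>a. a \<in> A \<Longrightarrow> x a \<in> Bg (g a)) \<Longrightarrow> prod x A \<in> Bg (sum g A)"
proof (induction A rule: infinite_finite_induct)
  case (insert a F)
  then show ?case using grade_mult[of "x a" "g a" "prod x F" "sum g F"] by simp
qed (simp_all add: one_in_grade_0)

lemma veronese_iff: "x \<in> veronese Bg d \<longleftrightarrow> (\<forall>i. hcomp x i \<noteq> 0 \<longrightarrow> i \<in> cyc d)"
proof
  assume "x \<in> veronese Bg d"
  then obtain c where c: "finite {i. c i \<noteq> 0}" "\<forall>i. c i \<in> Bg i" "{i. c i \<noteq> 0} \<subseteq> cyc d"
    "x = (\<Sum>i\<in>{i. c i \<noteq> 0}. c i)"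
    unfolding veronese_def by blast
  then have "hcomp x = c" by (intro hcomp_eqI[where J = "{i. c i \<noteq> 0}"]) auto
  then show "\<forall>i. hcomp x i \<noteq> 0 \<longrightarrow> i \<in> cyc d" using c(3) by auto
next
  assume "\<forall>i. hcomp x i \<noteq> 0 \<longrightarrow> i \<in> cyc d"
  then show "x \<in> veronese Bg d"
    unfolding veronese_def using finite_hcomp_support[of x] hcomp_in_grade[of x] sum_hcomp[of x]
    by (intro CollectI exI[of _ "hcomp x"]) auto
qed

lemma veronese_add: "x \<in> veronese Bg d \<Longrightarrow> y \<in> veronese Bg d \<Longrightarrow> x + y \<in> veronese Bg d"
  unfolding veronese_iff hcomp_add by (metis add.left_neutral add.right_neutral)

lemma veronese_diff: "x \<in> veronese Bg d \<Longrightarrow> y \<in> veronese Bg d \<Longrightarrow> x - y \<in> veronese Bg d"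
  unfolding veronese_iff hcomp_diff by (metis diff_zero diff_self)

lemma homogeneous_in_veronese: "x \<in> Bg g \<Longrightarrow> g \<in> cyc d \<Longrightarrow> x \<in> veronese Bg d"
  unfolding veronese_iff using hcomp_homogeneous by auto

lemma veronese_sum: "(\<And>a. a \<in> A \<Longrightarrow> x a \<in> veronese Bg d) \<Longrightarrow> sum x A \<in> veronese Bg d"
  by (induction A rule: infinite_finite_induct)
    (auto intro: veronese_add homogeneous_in_veronese[OF grade_0 nsm_in_cyc[of 0]])

lemma degree_in_cyc: "x \<in> Bg i \<Longrightarrow> x \<noteq> 0 \<Longrightarrow> x \<in> veronese Bg d \<Longrightarrow> i \<in> cyc d"
  unfolding veronese_iff using hcomp_homogeneous[of x i] by auto

end

section \<open>Finite generation of the Veronese subring\<close>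

lemma sum_list_map_eq_0: "(\<And>x. x \<in> set xs \<Longrightarrow> f x = 0) \<Longrightarrow> (\<Sum>x\<leftarrow>xs. f x) = (0::'a::monoid_add)"
  by (induction xs) auto

lemma alg_gen_sum: "0 \<in> K \<Longrightarrow> (\<And>a. a \<in> A \<Longrightarrow> g a \<in> alg_gen K T) \<Longrightarrow> sum g A \<in> alg_gen K T"
  by (induction A rule: infinite_finite_induct) (auto intro: alg_gen.intros)

lemma alg_gen_sum_list: "0 \<in> K \<Longrightarrow> (\<And>a. a \<in> set xs \<Longrightarrow> a \<in> alg_gen K T) \<Longrightarrow> sum_list xs \<in> alg_gen K T"
  by (induction xs) (auto intro: alg_gen.intros)

lemma alg_gen_trans: "x \<in> alg_gen K S \<Longrightarrow> S \<subseteq> alg_gen K T \<Longrightarrow> x \<in> alg_gen K T"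
  by (induction rule: alg_gen.induct) (auto intro: alg_gen.intros)

locale veronese_generation = graded_domain Bg for Bg :: "'g::ab_group_add \<Rightarrow> 'b::idom set" +
  fixes K S :: "'b set" and d :: 'g
  assumes K_subring: "is_subring K" and K_grade_0: "K \<subseteq> Bg 0"
    and finite_S: "finite S" and S_generates: "alg_gen K S = UNIV"
begin

definition gens :: "'b set" where
  "gens = (\<Union>s\<in>S. hcomp s ` {i. hcomp s i \<noteq> 0})"

definition deg :: "'b \<Rightarrow> 'g" where
  "deg h = (SOME g. h \<in> Bg g)"

lemma finite_gens: "finite gens"
  unfolding gens_def using finite_S finite_hcomp_support by auto

lemma gens_homogeneous: "h \<in> gens \<Longrightarrow> h \<in> Bg (deg h)"
  unfolding gens_def deg_def by (auto intro: someI hcomp_in_grade)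

lemma gens_generate: "alg_gen K gens = UNIV"
proof -
  have "S \<subseteq> alg_gen K gens"
  proof
    fix s assume "s \<in> S"
    then have "(\<Sum>i\<in>{i. hcomp s i \<noteq> 0}. hcomp s i) \<in> alg_gen K gens"
      by (intro alg_gen_sum[OF subring_0[OF K_subring]]) (auto simp: gens_def intro: alg_gen.base_S)
    then show "s \<in> alg_gen K gens" by (simp only: sum_hcomp)
  qed
  then show ?thesis using alg_gen_trans S_generates by blast
qed

text \<open>Exponent vectors \<open>\<alpha>\<close> are functions on the ambient type, supported on \<^const>\<open>gens\<close>.\<close>

definition monomial :: "('b \<Rightarrow> nat) \<Rightarrow> 'b" where
  "monomial \<alpha> = (\<Prod>h\<in>gens. h ^ \<alpha> h)"

definition mdeg :: "('b \<Rightarrow> nat) \<Rightarrow> 'g" where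
  "mdeg \<alpha> = (\<Sum>h\<in>gens. nsm (\<alpha> h) (deg h))"

definition total_degree :: "('b \<Rightarrow> nat) \<Rightarrow> nat" where
  "total_degree \<alpha> = (\<Sum>h\<in>gens. \<alpha> h)"

lemma monomial_in_grade: "monomial \<alpha> \<in> Bg (mdeg \<alpha>)"
  unfolding monomial_def mdeg_def by (intro prod_in_grade power_in_grade gens_homogeneous)

lemma monomial_add: "monomial (\<lambda>x. \<alpha> x + \<beta> x) = monomial \<alpha> * monomial \<beta>"
  unfolding monomial_def by (simp add: power_add prod.distrib)

lemma mdeg_add: "mdeg (\<lambda>x. \<alpha> x + \<beta> x) = mdeg \<alpha> + mdeg \<beta>"
  unfolding mdeg_def by (simp add: nsm_add sum.distrib)

lemma monomial_0: "monomial (\<lambda>_. 0) = 1"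
  unfolding monomial_def by simp

lemma term_in_grade: "k \<in> K \<Longrightarrow> k * monomial \<alpha> \<in> Bg (mdeg \<alpha>)"
  using grade_mult[of k 0 "monomial \<alpha>" "mdeg \<alpha>"] K_grade_0 monomial_in_grade by auto

definition supported :: "('b \<Rightarrow> nat) \<Rightarrow> bool" where
  "supported \<alpha> \<longleftrightarrow> (\<forall>x. x \<notin> gens \<longrightarrow> \<alpha> x = 0)"

definition lin_comb :: "('b \<times> ('b \<Rightarrow> nat)) list \<Rightarrow> 'b" where
  "lin_comb xs = (\<Sum>(k, \<alpha>)\<leftarrow>xs. k * monomial \<alpha>)"

definition lin_comb_mult ::
    "('b \<times> ('b \<Rightarrow> nat)) list \<Rightarrow> ('b \<times> ('b \<Rightarrow> nat)) list \<Rightarrow> ('b \<times> ('b \<Rightarrow> nat)) list" where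
  "lin_comb_mult xs ys = concat (map (\<lambda>(k, \<alpha>). map (\<lambda>(l, \<beta>). (k * l, \<lambda>x. \<alpha> x + \<beta> x)) ys) xs)"

lemma lin_comb_append: "lin_comb (xs @ ys) = lin_comb xs + lin_comb ys"
  unfolding lin_comb_def by simp

lemma lin_comb_lin_comb_mult: "lin_comb (lin_comb_mult xs ys) = lin_comb xs * lin_comb ys"
proof (induction xs)
  case (Cons p xs)
  obtain k \<alpha> where p: "p = (k, \<alpha>)" by fastforce
  have "lin_comb (map (\<lambda>(l, \<beta>). (k * l, \<lambda>x. \<alpha> x + \<beta> x)) ys) = k * monomial \<alpha> * lin_comb ys"
    unfolding lin_comb_def by (induction ys) (auto simp: monomial_add algebra_simps)
  then show ?case
    using Cons
    by (simp add: lin_comb_mult_def lin_comb_append p) (simp add: lin_comb_def algebra_simps)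
qed (simp add: lin_comb_mult_def lin_comb_def)

lemma lin_comb_exists: "\<exists>xs. (\<forall>(k, \<alpha>)\<in>set xs. k \<in> K \<and> supported \<alpha>) \<and> b = lin_comb xs"
proof -
  have "b \<in> alg_gen K gens" using gens_generate by simp
  then show ?thesis
  proof (induction rule: alg_gen.induct)
    case (base_K c)
    then show ?case
      by (intro exI[of _ "[(c, \<lambda>_. 0)]"]) (simp add: lin_comb_def monomial_0 supported_def)
  next
    case (base_S s)
    let ?\<alpha> = "\<lambda>x. if x = s then 1 else (0::nat)"
    have "monomial ?\<alpha> = (\<Prod>h\<in>gens. if h = s then h else 1)"
      unfolding monomial_def by (rule prod.cong) auto
    also have "\<dots> = s" using base_S finite_gens by (simp add: prod.delta)
    finally show ?case
      using base_S subring_1[OF K_subring]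
      by (intro exI[of _ "[(1, ?\<alpha>)]"]) (simp add: lin_comb_def supported_def)
  next
    case (add x y)
    then obtain xs ys where "\<forall>(k, \<alpha>)\<in>set xs. k \<in> K \<and> supported \<alpha>" "x = lin_comb xs"
      "\<forall>(k, \<alpha>)\<in>set ys. k \<in> K \<and> supported \<alpha>" "y = lin_comb ys" by blast
    then show ?case by (intro exI[of _ "xs @ ys"]) (auto simp: lin_comb_append)
  next
    case (mult x y)
    then obtain xs ys where xs: "\<forall>(k, \<alpha>)\<in>set xs. k \<in> K \<and> supported \<alpha>" "x = lin_comb xs"
      and ys: "\<forall>(k, \<alpha>)\<in>set ys. k \<in> K \<and> supported \<alpha>" "y = lin_comb ys" by blast
    have "\<forall>(k, \<alpha>)\<in>set (lin_comb_mult xs ys). k \<in> K \<and> supported \<alpha>"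
      using xs(1) ys(1) subring_mult[OF K_subring]
      by (fastforce simp: lin_comb_mult_def supported_def)
    then show ?case using xs ys
      by (intro exI[of _ "lin_comb_mult xs ys"]) (auto simp: lin_comb_lin_comb_mult)
  qed
qed

text \<open>Dropping the terms of degree outside \<open>\<langle>d\<rangle>\<close> does not change an element of \<open>B\<^sup>(\<^sup>d\<^sup>)\<close>.\<close>
lemma veronese_lin_comb:
  assumes x: "x \<in> veronese Bg d"
  shows "\<exists>xs. (\<forall>(k, \<alpha>)\<in>set xs. k \<in> K \<and> supported \<alpha> \<and> mdeg \<alpha> \<in> cyc d) \<and> x = lin_comb xs"
proof -
  obtain xs where xs: "\<forall>(k, \<alpha>)\<in>set xs. k \<in> K \<and> supported \<alpha>" "x = lin_comb xs"
    using lin_comb_exists by blast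
  let ?P = "\<lambda>p. mdeg (snd p) \<in> cyc d"
  let ?ys = "filter ?P xs" and ?zs = "filter (\<lambda>p. \<not> ?P p) xs"
  have split: "lin_comb xs = lin_comb ?ys + lin_comb ?zs"
    unfolding lin_comb_def by (induction xs) auto
  have "lin_comb ?ys \<in> veronese Bg d"
    using xs(1) unfolding lin_comb_def
    by (induction xs) (auto intro!: veronese_add homogeneous_in_veronese[OF term_in_grade]
        homogeneous_in_veronese[OF grade_0 nsm_in_cyc])
  then have zs: "lin_comb ?zs \<in> veronese Bg d"
    using veronese_diff[OF x] xs(2) split by (metis add_diff_cancel_left')
  have "lin_comb ?zs = 0"
  proof (rule eq_0_if_hcomp_eq_0)
    fix i
    show "hcomp (lin_comb ?zs) i = 0"
    proof (cases "i \<in> cyc d")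
      case False
      then show ?thesis using zs unfolding veronese_iff by blast
    next
      case True
      have "hcomp (k * monomial \<alpha>) i = 0" if "(k, \<alpha>) \<in> set ?zs" for k \<alpha>
        using that xs(1) True hcomp_homogeneous[OF term_in_grade, of k \<alpha>] by auto
      then show ?thesis
        unfolding lin_comb_def hcomp_sum_list map_map
        by (intro sum_list_map_eq_0) (auto simp: o_def split: prod.splits)
    qed
  qed
  then show ?thesis using xs split by (intro exI[of _ ?ys]) auto
qed

definition exps :: "('b \<Rightarrow> nat) set" where
  "exps = {\<alpha>. supported \<alpha> \<and> mdeg \<alpha> \<in> cyc d}"

definition minimal_exps :: "('b \<Rightarrow> nat) set" where
  "minimal_exps = {\<alpha> \<in> exps. \<alpha> \<noteq> (\<lambda>_. 0) \<and>
     (\<forall>\<beta>\<in>exps. \<beta> \<noteq> (\<lambda>_. 0) \<longrightarrow> (\<forall>x. \<beta> x \<le> \<alpha> x) \<longrightarrow> \<beta> = \<alpha>)}"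

lemma finite_minimal_exps: "finite minimal_exps"
  by (rule finite_antichain[OF finite_gens]) (auto simp: minimal_exps_def exps_def supported_def)

lemma total_degree_le_imp_eq:
  assumes "\<forall>x. \<gamma> x \<le> \<beta> x" "supported \<beta>" "total_degree \<beta> \<le> total_degree \<gamma>"
  shows "\<gamma> = \<beta>"
proof (rule ccontr)
  assume "\<gamma> \<noteq> \<beta>"
  then obtain h where h: "\<gamma> h < \<beta> h" using assms(1) by (meson ext le_neq_implies_less)
  then have "h \<in> gens" using assms(2) unfolding supported_def by fastforce
  then have "total_degree \<gamma> < total_degree \<beta>"
    unfolding total_degree_def using assms(1) h by (intro sum_strict_mono_ex1[OF finite_gens]) auto
  then show False using assms(3) by simp
qed

lemma minimal_exp_below:
  assumes "\<alpha> \<in> exps" "\<alpha> \<noteq> (\<lambda>_. 0)"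
  obtains \<beta> where "\<beta> \<in> minimal_exps" "\<forall>x. \<beta> x \<le> \<alpha> x"
proof -
  let ?C = "{\<beta>\<in>exps. \<beta> \<noteq> (\<lambda>_. 0) \<and> (\<forall>x. \<beta> x \<le> \<alpha> x)}"
  have "\<alpha> \<in> ?C" using assms by auto
  then obtain \<beta> where \<beta>: "\<beta> \<in> ?C" "\<And>\<gamma>. \<gamma> \<in> ?C \<Longrightarrow> total_degree \<beta> \<le> total_degree \<gamma>"
    using ex_has_least_nat[of "\<lambda>\<beta>. \<beta> \<in> ?C" \<alpha> total_degree] by blast
  have "\<beta> \<in> minimal_exps" unfolding minimal_exps_def
  proof (intro CollectI conjI ballI impI)
    show "\<beta> \<in> exps" "\<beta> \<noteq> (\<lambda>_. 0)" using \<beta>(1) by auto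
    fix \<gamma> assume \<gamma>: "\<gamma> \<in> exps" "\<gamma> \<noteq> (\<lambda>_. 0)" "\<forall>x. \<gamma> x \<le> \<beta> x"
    then have "\<gamma> \<in> ?C" using \<beta>(1) le_trans by blast
    then have "total_degree \<beta> \<le> total_degree \<gamma>" by (rule \<beta>(2))
    then show "\<gamma> = \<beta>" using total_degree_le_imp_eq \<gamma>(3) \<beta>(1) unfolding exps_def by blast
  qed
  then show ?thesis using that \<beta>(1) by blast
qed

lemma total_degree_diff_less:
  assumes "\<beta> \<noteq> (\<lambda>_. 0)" "supported \<beta>" "\<forall>x. \<beta> x \<le> \<alpha> x"
  shows "total_degree (\<lambda>x. \<alpha> x - \<beta> x) < total_degree \<alpha>"
proof -
  obtain h where h: "\<beta> h \<noteq> 0" using assms(1) by auto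
  moreover have "\<beta> h \<le> \<alpha> h" using assms(3) by blast
  ultimately have "\<alpha> h - \<beta> h < \<alpha> h" by linarith
  moreover have "h \<in> gens" using h assms(2) unfolding supported_def by auto
  ultimately show ?thesis unfolding total_degree_def
    by (intro sum_strict_mono_ex1[OF finite_gens]) auto
qed

lemma monomial_in_alg_gen: "\<alpha> \<in> exps \<Longrightarrow> monomial \<alpha> \<in> alg_gen K (monomial ` minimal_exps)"
proof (induction "total_degree \<alpha>" arbitrary: \<alpha> rule: less_induct)
  case less
  show ?case
  proof (cases "\<alpha> = (\<lambda>_. 0)")
    case True
    then show ?thesis using monomial_0 subring_1[OF K_subring] by (simp add: alg_gen.base_K)
  next
    case False
    then obtain \<beta> where \<beta>: "\<beta> \<in> minimal_exps" "\<forall>x. \<beta> x \<le> \<alpha> x"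
      using minimal_exp_below less.prems by blast
    then have \<beta>_exp: "\<beta> \<noteq> (\<lambda>_. 0)" "supported \<beta>" "mdeg \<beta> \<in> cyc d"
      unfolding minimal_exps_def exps_def by auto
    define \<alpha>' where "\<alpha>' = (\<lambda>x. \<alpha> x - \<beta> x)"
    have decomp: "\<alpha> = (\<lambda>x. \<alpha>' x + \<beta> x)" unfolding \<alpha>'_def using \<beta>(2) by auto
    have "mdeg \<alpha>' = mdeg \<alpha> - mdeg \<beta>" using mdeg_add[of \<alpha>' \<beta>] decomp by (simp add: algebra_simps)
    then have "\<alpha>' \<in> exps"
      using less.prems \<beta>_exp(3) cyc_diff unfolding exps_def supported_def \<alpha>'_def by auto
    moreover have "total_degree \<alpha>' < total_degree \<alpha>"
      unfolding \<alpha>'_def using total_degree_diff_less \<beta>_exp(1,2) \<beta>(2) .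
    ultimately have "monomial \<alpha>' \<in> alg_gen K (monomial ` minimal_exps)" using less.hyps by blast
    moreover have "monomial \<beta> \<in> alg_gen K (monomial ` minimal_exps)"
      using \<beta>(1) by (auto intro: alg_gen.base_S)
    ultimately show ?thesis using monomial_add decomp by (metis alg_gen.mult)
  qed
qed

lemma veronese_finitely_generated:
  "\<exists>E. finite E \<and> E \<subseteq> veronese Bg d \<and> veronese Bg d \<subseteq> alg_gen K E"
proof (intro exI conjI)
  show "finite (monomial ` minimal_exps)" using finite_minimal_exps by simp
  show "monomial ` minimal_exps \<subseteq> veronese Bg d"
    unfolding minimal_exps_def exps_def using homogeneous_in_veronese[OF monomial_in_grade] by auto
  show "veronese Bg d \<subseteq> alg_gen K (monomial ` minimal_exps)"
  proof
    fix x assume "x \<in> veronese Bg d"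
    then obtain xs where
      xs: "\<forall>(k, \<alpha>)\<in>set xs. k \<in> K \<and> supported \<alpha> \<and> mdeg \<alpha> \<in> cyc d" "x = lin_comb xs"
      using veronese_lin_comb by blast
    have "k * monomial \<alpha> \<in> alg_gen K (monomial ` minimal_exps)" if "(k, \<alpha>) \<in> set xs" for k \<alpha>
    proof -
      have "k \<in> K" "\<alpha> \<in> exps" using xs(1) that unfolding exps_def by auto
      then show ?thesis using monomial_in_alg_gen by (blast intro: alg_gen.mult alg_gen.base_K)
    qed
    then show "x \<in> alg_gen K (monomial ` minimal_exps)"
      unfolding xs(2) lin_comb_def by (intro alg_gen_sum_list[OF subring_0[OF K_subring]]) auto
  qed
qed

end

lemma (in graded_domain) finitely_generated_veronese:
  assumes "is_subring K" "K \<subseteq> Bg 0" "finitely_generated_algebra K"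
  obtains E where "finite E" "E \<subseteq> veronese Bg d" "veronese Bg d \<subseteq> alg_gen K E"
proof -
  obtain S where "finite S" "alg_gen K S = UNIV"
    using assms(3) unfolding finitely_generated_algebra_def by blast
  then interpret veronese_generation Bg K S d
    by unfold_locales (use assms(1,2) in auto)
  show ?thesis using veronese_finitely_generated that by blast
qed

lemma to_fract_power: "to_fract (x ^ n) = to_fract x ^ n"
  by (induction n) simp_all

lemma range_to_fract_subring: "is_subring (range (to_fract :: 'a::idom \<Rightarrow> 'a fract))"
  unfolding is_subring_def
proof (intro conjI ballI)
  show "0 \<in> range to_fract" "1 \<in> range to_fract"
    using rangeI[of to_fract 0] rangeI[of to_fract 1] by simp_all
  fix x y :: "'a fract" assume "x \<in> range to_fract" "y \<in> range to_fract"
  then obtain a b where "x = to_fract a" "y = to_fract b" by blast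
  then show "x + y \<in> range to_fract" "x * y \<in> range to_fract"
    using rangeI[of to_fract "a + b"] rangeI[of to_fract "a * b"] by simp_all
next
  fix x :: "'a fract" assume "x \<in> range to_fract"
  then obtain a where "x = to_fract a" by blast
  then show "- x \<in> range to_fract" using rangeI[of to_fract "- a"] by simp
qed

lemma inv_to_fract [simp]: "inv to_fract (to_fract x) = x"
  by (rule inv_f_f) (simp add: inj_def)

lemma to_fract_alg_gen_subset:
  assumes "is_subring L" "to_fract ` K \<subseteq> L" "to_fract ` E \<subseteq> L"
  shows "to_fract ` alg_gen K E \<subseteq> L"
proof
  fix y assume "y \<in> to_fract ` alg_gen K E"
  then obtain x where "x \<in> alg_gen K E" "y = to_fract x" by blast
  then show "y \<in> L"
  proof (induction arbitrary: y rule: alg_gen.induct)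
    case (add x x')
    then show ?case using subring_add[OF assms(1)] by simp
  next
    case (mult x x')
    then show ?case using subring_mult[OF assms(1)] by simp
  qed (use assms in auto)
qed

context
  fixes L :: "'b::idom fract set" and \<Delta> :: "'b fract \<Rightarrow> 'b fract" and R :: "'b set"
  assumes \<Delta>: "is_derivation_on L \<Delta>" and R_L: "to_fract ` R \<subseteq> L"
    and \<Delta>_R: "\<And>x. x \<in> R \<Longrightarrow> \<Delta> (to_fract x) \<in> to_fract ` R"
begin

lemma to_fract_restricted_derivation:
  "x \<in> R \<Longrightarrow> to_fract (inv to_fract (\<Delta> (to_fract x))) = \<Delta> (to_fract x)"
  using \<Delta>_R by (blast intro: f_inv_into_f)

lemma restricted_derivation_in: "x \<in> R \<Longrightarrow> inv to_fract (\<Delta> (to_fract x)) \<in> R"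
  using \<Delta>_R by fastforce

lemma is_derivation_on_restricted: "is_derivation_on R (\<lambda>x. inv to_fract (\<Delta> (to_fract x)))"
  unfolding is_derivation_on_def
proof (intro conjI ballI)
  fix x assume "x \<in> R"
  then show "inv to_fract (\<Delta> (to_fract x)) \<in> R" by (rule restricted_derivation_in)
next
  fix x y assume xy: "x \<in> R" "y \<in> R"
  then have L: "to_fract x \<in> L" "to_fract y \<in> L" using R_L by auto
  let ?D = "\<lambda>x. inv to_fract (\<Delta> (to_fract x))"
  have "\<Delta> (to_fract (x + y)) = to_fract (?D x + ?D y)"
    using derivation_add[OF \<Delta> L] xy to_fract_restricted_derivation by simp
  then show "?D (x + y) = ?D x + ?D y" by (simp only: inv_to_fract)
  have "\<Delta> (to_fract (x * y)) = to_fract (x * ?D y + y * ?D x)"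
    using derivation_mult[OF \<Delta> L] xy to_fract_restricted_derivation by simp
  then show "?D (x * y) = x * ?D y + y * ?D x" by (simp only: inv_to_fract)
qed

lemma locally_nilpotent_on_restricted:
  assumes "locally_nilpotent_on L \<Delta>"
  shows "locally_nilpotent_on R (\<lambda>x. inv to_fract (\<Delta> (to_fract x)))"
  unfolding locally_nilpotent_on_def
proof
  fix x assume x: "x \<in> R"
  let ?D = "\<lambda>x. inv to_fract (\<Delta> (to_fract x))"
  have "to_fract ((?D ^^ n) x) = (\<Delta> ^^ n) (to_fract x) \<and> (?D ^^ n) x \<in> R" for n
  proof (induction n)
    case (Suc n)
    then show ?case
      using to_fract_restricted_derivation[of "(?D ^^ n) x"]
        restricted_derivation_in[of "(?D ^^ n) x"]
      by simp
  qed (use x in simp)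
  moreover obtain n where "(\<Delta> ^^ n) (to_fract x) = 0"
    using assms x R_L unfolding locally_nilpotent_on_def by blast
  ultimately show "\<exists>n. (?D ^^ n) x = 0" by (metis to_fract_eq_0_iff)
qed

end

lemma bounded_denominators:
  fixes s :: "'b::idom"
  assumes \<Delta>: "is_derivation_on L \<Delta>" and "s \<noteq> 0" "finite E" and L: "to_fract ` alg_gen K E \<subseteq> L"
    and K: "\<And>k. k \<in> K \<Longrightarrow> \<Delta> (to_fract k) = 0"
    and E: "\<And>e. e \<in> E \<Longrightarrow> \<Delta> (to_fract e) \<in> localize (range to_fract) (to_fract s)"
  shows "\<exists>N. \<forall>x\<in>alg_gen K E. to_fract s ^ N * \<Delta> (to_fract x) \<in> range to_fract"
proof -
  have "\<forall>e\<in>E. \<exists>b m. \<Delta> (to_fract e) = to_fract b / to_fract s ^ m"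
    using E unfolding localize_def by blast
  then obtain b m where bm: "\<And>e. e \<in> E \<Longrightarrow> \<Delta> (to_fract e) = to_fract (b e) / to_fract s ^ m e"
    by metis
  define N where "N = Max (m ` E)"
  have "to_fract s ^ N * \<Delta> (to_fract x) \<in> range to_fract" if "x \<in> alg_gen K E" for x
    using that
  proof (induction rule: alg_gen.induct)
    case (base_K c)
    then show ?case using K by (simp add: image_iff)
  next
    case (base_S e)
    have "m e \<le> N" unfolding N_def using base_S assms(3) by simp
    then have "to_fract s ^ N = to_fract (s ^ (N - m e)) * to_fract s ^ m e"
      by (simp add: to_fract_power flip: power_add)
    then have "to_fract s ^ N * \<Delta> (to_fract e) = to_fract (s ^ (N - m e) * b e)"
      using bm[OF base_S] assms(2) by simp
    then show ?case by blast
  next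
    case (add x y)
    obtain a b where "to_fract s ^ N * \<Delta> (to_fract x) = to_fract a"
      "to_fract s ^ N * \<Delta> (to_fract y) = to_fract b" using add.IH by auto
    moreover have "to_fract x \<in> L" "to_fract y \<in> L" using add.hyps L by auto
    ultimately have "to_fract s ^ N * \<Delta> (to_fract (x + y)) = to_fract (a + b)"
      using derivation_add[OF \<Delta>] by (simp add: algebra_simps)
    then show ?case by blast
  next
    case (mult x y)
    obtain a b where "to_fract s ^ N * \<Delta> (to_fract x) = to_fract a"
      "to_fract s ^ N * \<Delta> (to_fract y) = to_fract b" using mult.IH by auto
    moreover have "to_fract x \<in> L" "to_fract y \<in> L" using mult.hyps L by auto
    ultimately have "to_fract s ^ N * \<Delta> (to_fract (x * y)) = to_fract (x * b + y * a)"
      using derivation_mult[OF \<Delta>] by (simp add: algebra_simps)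
    then show ?case by blast
  qed
  then show ?thesis by blast
qed

section \<open>The degree-zero subring \<open>B\<^sub>(\<^sub>f\<^sub>)\<close> of a homogeneous element\<close>

locale homogeneous_element = graded_domain Bg for Bg :: "'g::ab_group_add \<Rightarrow> 'b::idom set" +
  fixes d :: 'g and f :: 'b
  assumes f_in: "f \<in> Bg d" and f_nonzero: "f \<noteq> 0" and d_infinite_order: "infinite_order d"
begin

lemma f_power_in: "f ^ n \<in> Bg (nsm n d)"
  by (rule power_in_grade[OF f_in])

lemma to_fract_f_nonzero: "to_fract f \<noteq> 0"
  using f_nonzero by simp

lemma f_not_in_grade_0: "f \<notin> Bg 0"
  using homogeneous_unique_degree[OF f_in _ f_nonzero] infinite_order_nonzero[OF d_infinite_order]
  by auto

lemma deg0_loc_iff: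
  "z \<in> deg0_loc Bg d f \<longleftrightarrow> (\<exists>a n. a \<in> Bg (nsm n d) \<and> z = to_fract a / to_fract f ^ n)"
  unfolding deg0_loc_def by (auto simp: Fract_conv_to_fract to_fract_power)

lemma deg0_loc_subset_fractions: "deg0_loc Bg d f \<subseteq> localize (range to_fract) (to_fract f)"
proof
  fix z assume "z \<in> deg0_loc Bg d f"
  then obtain a n where "z = to_fract a / to_fract f ^ n" unfolding deg0_loc_iff by blast
  then show "z \<in> localize (range to_fract) (to_fract f)" unfolding localize_def by blast
qed

lemma deg0_loc_common_denominator:
  assumes "finite I" "\<And>k. k \<in> I \<Longrightarrow> c k \<in> deg0_loc Bg d f"
  obtains a N where "\<And>k. k \<in> I \<Longrightarrow> a k \<in> Bg (nsm N d)"
    "\<And>k. k \<in> I \<Longrightarrow> c k = to_fract (a k) / to_fract f ^ N"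
proof -
  let ?\<phi> = "to_fract f"
  have "\<forall>k\<in>I. \<exists>a n. a \<in> Bg (nsm n d) \<and> c k = to_fract a / ?\<phi> ^ n"
    using assms(2) deg0_loc_iff by blast
  then obtain a n where an: "\<And>k. k \<in> I \<Longrightarrow> a k \<in> Bg (nsm (n k) d)"
    "\<And>k. k \<in> I \<Longrightarrow> c k = to_fract (a k) / ?\<phi> ^ n k"
    by metis
  define N where "N = Max (n ` I)"
  have nN: "k \<in> I \<Longrightarrow> n k \<le> N" for k
    unfolding N_def using assms(1) by simp
  have "a k * f ^ (N - n k) \<in> Bg (nsm N d)" if "k \<in> I" for k
    using grade_mult[OF an(1)[OF that] f_power_in, of "N - n k"] nsm_add[of "n k" "N - n k" d]
      nN[OF that]
    by simp
  moreover have "c k = to_fract (a k * f ^ (N - n k)) / ?\<phi> ^ N" if "k \<in> I" for k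
  proof -
    have "?\<phi> ^ N = ?\<phi> ^ n k * ?\<phi> ^ (N - n k)" using nN[OF that] by (simp flip: power_add)
    then show ?thesis using an(2)[OF that] to_fract_f_nonzero
      by (simp add: to_fract_power divide_simps)
  qed
  ultimately show ?thesis by (rule that[of "\<lambda>k. a k * f ^ (N - n k)" N])
qed

text \<open>Clearing denominators turns \<open>q(f) = 0\<close> into a vanishing sum of homogeneous elements of
  pairwise distinct degrees \<open>(N + k) d\<close>.\<close>
lemma f_transcendental_over_deg0_loc:
  assumes q: "poly_over (deg0_loc Bg d f) q" and root: "poly q (to_fract f) = 0"
  shows "q = 0"
proof -
  obtain a N where a: "\<And>k. k \<in> {..degree q} \<Longrightarrow> a k \<in> Bg (nsm N d)"
    and coeff_q: "\<And>k. k \<in> {..degree q} \<Longrightarrow> coeff q k = to_fract (a k) / to_fract f ^ N"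
    using deg0_loc_common_denominator[of "{..degree q}" "coeff q"] q unfolding poly_over_def
    by blast
  have "0 = (\<Sum>k\<le>degree q. coeff q k * to_fract f ^ k)" using root by (simp add: poly_altdef)
  also have "\<dots> = to_fract (\<Sum>k\<le>degree q. a k * f ^ k) / to_fract f ^ N"
    by (simp add: coeff_q to_fract_power sum_divide_distrib)
  finally have "to_fract (\<Sum>k\<le>degree q. a k * f ^ k) = 0"
    using to_fract_f_nonzero by (simp del: to_fract_sum)
  then have sum_0: "(\<Sum>k\<le>degree q. a k * f ^ k) = 0" by (simp only: to_fract_eq_0_iff)
  have "a k * f ^ k = 0" if k: "k \<le> degree q" for k
  proof (rule homogeneous_sum_eq_0[OF _ _ _ sum_0])
    show "inj_on (\<lambda>k. nsm (N + k) d) {..degree q}"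
      using nsm_inj[OF d_infinite_order] unfolding inj_on_def by fastforce
    show "\<And>i. i \<in> {..degree q} \<Longrightarrow> a i * f ^ i \<in> Bg (nsm (N + i) d)"
      using grade_mult[OF a f_power_in] by (simp add: nsm_add)
  qed (use k in auto)
  then have "k \<le> degree q \<Longrightarrow> coeff q k = 0" for k
    using coeff_q f_nonzero by simp
  then show "q = 0" by (metis coeff_eq_0 leading_coeff_0_iff not_le)
qed

lemma homogeneous_fraction:
  assumes "x \<in> Bg g" "g \<in> cyc d"
  obtains k n w where "g = nsm k d - nsm n d" "w \<in> deg0_loc Bg d f"
    "to_fract x = to_fract f ^ k * w / to_fract f ^ n"
proof -
  obtain k n where g: "g = nsm k d - nsm n d" using assms(2) unfolding cyc_iff_diff by blast
  have "x * f ^ n \<in> Bg (nsm k d)"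
    using grade_mult[OF assms(1) f_power_in, of n] g by simp
  then have "to_fract (x * f ^ n) / to_fract f ^ k \<in> deg0_loc Bg d f"
    unfolding deg0_loc_iff by blast
  moreover have
    "to_fract x = to_fract f ^ k * (to_fract (x * f ^ n) / to_fract f ^ k) / to_fract f ^ n"
    using to_fract_f_nonzero by (simp add: to_fract_power)
  ultimately show ?thesis using that g by blast
qed

end

section \<open>The derivation \<open>\<partial>/\<partial>t\<close> on \<open>B\<^sup>(\<^sup>d\<^sup>)\<^sub>f\<close>\<close>

locale cylinder = homogeneous_element Bg d f for Bg :: "'g::ab_group_add \<Rightarrow> 'b::idom set" and d f +
  fixes A :: "'b fract set" and t :: "'b fract"
  assumes A_subring: "is_subring A"
    and deg0_loc_adjoin: "deg0_loc Bg d f = adjoin A t"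
    and t_transcendental: "poly_over A p \<Longrightarrow> poly p t = 0 \<Longrightarrow> p = 0"
begin

sublocale coeff_ext: transcendental_extension A t
  by unfold_locales (use A_subring t_transcendental in auto)

lemma deg0_loc_subring: "is_subring (deg0_loc Bg d f)"
  unfolding deg0_loc_adjoin by (rule adjoin_subring[OF A_subring])

sublocale f_ext: transcendental_extension "deg0_loc Bg d f" "to_fract f"
  by unfold_locales (use deg0_loc_subring f_transcendental_over_deg0_loc in auto)

sublocale laurent: localization "adjoin (deg0_loc Bg d f) (to_fract f)" "to_fract f"
  by unfold_locales
    (use adjoin_subring[OF deg0_loc_subring] var_in_adjoin[OF deg0_loc_subring]
      to_fract_f_nonzero in auto)

abbreviation laurent_ring :: "'b fract set" where
  "laurent_ring \<equiv> localize (adjoin (deg0_loc Bg d f) (to_fract f)) (to_fract f)"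

abbreviation d_dt :: "'b fract \<Rightarrow> 'b fract" where
  "d_dt \<equiv> coeff_ext.partial_derivative"

definition laurent_der :: "'b fract \<Rightarrow> 'b fract" where
  "laurent_der = laurent.localize_derivation (f_ext.extend_derivation d_dt 0)"

lemma d_dt_derivation: "is_derivation_on (deg0_loc Bg d f) d_dt"
  unfolding deg0_loc_adjoin by (rule coeff_ext.is_derivation_on_partial_derivative)

lemma f_ext_derivation:
  "is_derivation_on (adjoin (deg0_loc Bg d f) (to_fract f)) (f_ext.extend_derivation d_dt 0)"
  using f_ext.is_derivation_on_extend[OF d_dt_derivation]
    subring_0[OF adjoin_subring[OF deg0_loc_subring]]
  by blast

lemma f_ext_f: "f_ext.extend_derivation d_dt 0 (to_fract f) = 0"
  by (rule f_ext.extend_derivation_var[OF d_dt_derivation])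

lemma laurent_der_frac:
  "y \<in> adjoin (deg0_loc Bg d f) (to_fract f) \<Longrightarrow>
    laurent_der (y / to_fract f ^ n) = f_ext.extend_derivation d_dt 0 y / to_fract f ^ n"
  unfolding laurent_der_def by (rule laurent.localize_derivation_frac[OF f_ext_derivation f_ext_f])

lemma laurent_der_deg0_loc: "w \<in> deg0_loc Bg d f \<Longrightarrow> laurent_der w = d_dt w"
  using laurent_der_frac[of w 0] subset_adjoin[OF deg0_loc_subring]
    f_ext.extend_derivation_base[OF d_dt_derivation] by auto

lemma laurent_der_t: "laurent_der t = 1"
  using laurent_der_deg0_loc coeff_ext.partial_derivative_var var_in_adjoin[OF A_subring]
  unfolding deg0_loc_adjoin by simp

lemma laurent_der_f: "laurent_der (to_fract f) = 0"
  using laurent_der_frac[OF var_in_adjoin[OF deg0_loc_subring], of 0] f_ext_f by simp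

lemma is_derivation_on_laurent_der: "is_derivation_on laurent_ring laurent_der"
  unfolding laurent_der_def by (rule laurent.is_derivation_on_localize[OF f_ext_derivation f_ext_f])

lemma locally_nilpotent_on_laurent_der: "locally_nilpotent_on laurent_ring laurent_der"
  unfolding laurent_der_def
proof (rule laurent.locally_nilpotent_on_localize[OF f_ext_derivation f_ext_f])
  show "locally_nilpotent_on (adjoin (deg0_loc Bg d f) (to_fract f))
    (f_ext.extend_derivation d_dt 0)"
    using f_ext.locally_nilpotent_on_extend_0[OF d_dt_derivation]
      coeff_ext.locally_nilpotent_on_partial_derivative
    unfolding deg0_loc_adjoin by blast
qed

lemma laurent_ring_subring: "is_subring laurent_ring"
  by (rule laurent.localize_subring)

lemma f_in_laurent_ring: "to_fract f \<in> laurent_ring"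
  using laurent.subset_localize var_in_adjoin[OF deg0_loc_subring] by blast

lemma laurent_ring_subset_fractions: "laurent_ring \<subseteq> localize (range to_fract) (to_fract f)"
proof -
  interpret fractions: localization "range to_fract" "to_fract f"
    by unfold_locales (use range_to_fract_subring to_fract_f_nonzero in auto)
  have "to_fract f \<in> localize (range to_fract) (to_fract f)"
    using fractions.subset_localize by blast
  then have "adjoin (deg0_loc Bg d f) (to_fract f) \<subseteq> localize (range to_fract) (to_fract f)"
    by (intro adjoin_least fractions.localize_subring deg0_loc_subset_fractions)
  then show ?thesis
    by (intro localize_least fractions.localize_subring fractions.inverse_in_localize)
qed

lemma to_fract_homogeneous_in_laurent_ring:
  assumes "x \<in> Bg g" "g \<in> cyc d"
  shows "to_fract x \<in> laurent_ring"
proof -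
  obtain k n w where w: "w \<in> deg0_loc Bg d f" "to_fract x = to_fract f ^ k * w / to_fract f ^ n"
    using homogeneous_fraction[OF assms] by metis
  have "to_fract f ^ k * w \<in> adjoin (deg0_loc Bg d f) (to_fract f)"
    using w(1) subset_adjoin[OF deg0_loc_subring] var_in_adjoin[OF deg0_loc_subring]
    by (intro subring_mult[OF adjoin_subring[OF deg0_loc_subring]]
        subring_power[OF adjoin_subring[OF deg0_loc_subring]]) auto
  then show ?thesis unfolding w(2) localize_def by blast
qed

lemma to_fract_veronese_subset: "to_fract ` veronese Bg d \<subseteq> laurent_ring"
proof
  fix y assume "y \<in> to_fract ` veronese Bg d"
  then obtain x where x: "x \<in> veronese Bg d" "y = to_fract x" by blast
  have "to_fract x = (\<Sum>i\<in>{i. hcomp x i \<noteq> 0}. to_fract (hcomp x i))"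
    using sum_hcomp[of x] by (metis to_fract_sum)
  also have "\<dots> \<in> laurent_ring"
    using x(1) unfolding veronese_iff
    by (intro subring_sum[OF laurent_ring_subring]
        to_fract_homogeneous_in_laurent_ring[OF hcomp_in_grade]) auto
  finally show "y \<in> laurent_ring" using x(2) by simp
qed

lemma laurent_der_homogeneous:
  assumes "x \<in> Bg g" "g \<in> cyc d"
  obtains a m where "a \<in> Bg (g + nsm m d)" "laurent_der (to_fract x) = to_fract a / to_fract f ^ m"
proof -
  let ?\<phi> = "to_fract f"
  obtain k n w where g: "g = nsm k d - nsm n d" and w: "w \<in> deg0_loc Bg d f"
    "to_fract x = ?\<phi> ^ k * w / ?\<phi> ^ n"
    using homogeneous_fraction[OF assms] .
  obtain a m where a: "a \<in> Bg (nsm m d)" "d_dt w = to_fract a / ?\<phi> ^ m"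
    using derivation_closed[OF d_dt_derivation w(1)] unfolding deg0_loc_iff by blast
  let ?R = "adjoin (deg0_loc Bg d f) ?\<phi>"
  have R: "is_subring ?R" "deg0_loc Bg d f \<subseteq> ?R" "?\<phi> \<in> ?R"
    using adjoin_subring subset_adjoin var_in_adjoin deg0_loc_subring by blast+
  have "?\<phi> ^ k \<in> ?R" "f_ext.extend_derivation d_dt 0 (?\<phi> ^ k) = 0"
    using subring_power[OF R(1,3)] derivation_power_const[OF R(1) f_ext_derivation R(3) f_ext_f]
    by blast+
  then have "f_ext.extend_derivation d_dt 0 (?\<phi> ^ k * w) = ?\<phi> ^ k * d_dt w"
    using derivation_mult_const[OF R(1) f_ext_derivation] w(1) R(2)
      f_ext.extend_derivation_base[OF d_dt_derivation] by auto
  then have "laurent_der (to_fract x) = ?\<phi> ^ k * d_dt w / ?\<phi> ^ n"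
    unfolding w(2) using laurent_der_frac subring_mult[OF R(1) \<open>?\<phi> ^ k \<in> ?R\<close>] w(1) R(2) by auto
  also have "\<dots> = to_fract (f ^ k * a) / ?\<phi> ^ (n + m)"
    using a(2) to_fract_f_nonzero by (simp add: to_fract_power power_add)
  finally have "laurent_der (to_fract x) = to_fract (f ^ k * a) / ?\<phi> ^ (n + m)" .
  moreover have "f ^ k * a \<in> Bg (g + nsm (n + m) d)"
    using grade_mult[OF f_power_in a(1), of k] g by (simp add: nsm_add)
  ultimately show ?thesis using that by blast
qed

lemma laurent_der_unit:
  assumes "k \<in> Bg 0" "k' \<in> Bg 0" "k * k' = 1"
  shows "laurent_der (to_fract k) = 0"
proof -
  have "to_fract k = to_fract k / to_fract f ^ 0" "to_fract k' = to_fract k' / to_fract f ^ 0"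
    by simp_all
  then have "to_fract k \<in> deg0_loc Bg d f" "to_fract k' \<in> deg0_loc Bg d f"
    using assms(1,2) unfolding deg0_loc_iff by (metis nsm.simps(1))+
  moreover have "to_fract k * to_fract k' = 1" using assms(3) by (metis to_fract_1 to_fract_mult)
  ultimately show ?thesis
    using laurent_der_deg0_loc coeff_ext.partial_derivative_unit unfolding deg0_loc_adjoin by metis
qed

end

lemma (in graded_domain) cylinder_if_cylindrical:
  assumes "cylindrical Bg f" "f \<in> Bg d"
  obtains A t where "cylinder Bg d f A t"
proof -
  obtain d' where d': "f \<noteq> 0" "f \<in> Bg d'" "infinite_order d'" "poly_ring_one_var (deg0_loc Bg d' f)"
    using assms(1) unfolding cylindrical_def by blast
  then have "d' = d" using homogeneous_unique_degree assms(2) by blast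
  then obtain A t where "is_subring A" "deg0_loc Bg d f = adjoin A t"
    "\<And>p. poly_over A p \<Longrightarrow> poly p t = 0 \<Longrightarrow> p = 0"
    using d'(4) unfolding poly_ring_one_var_def adjoin_def poly_over_def by blast
  then have "cylinder Bg d f A t"
    by unfold_locales (use d' \<open>d' = d\<close> grading in auto)
  then show ?thesis by (rule that)
qed

text \<open>Multiplying \<^const>\<open>cylinder.laurent_der\<close> by a power of \<open>f\<close> clears the denominators of its
  values on the finitely many generators of \<open>B\<^sup>(\<^sup>d\<^sup>)\<close>, hence on all of \<open>B\<^sup>(\<^sup>d\<^sup>)\<close>.\<close>

locale cylinder_with_generators = cylinder Bg d f A t
  for Bg :: "'g::ab_group_add \<Rightarrow> 'b::idom set" and d f A t +
  fixes K E :: "'b set"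
  assumes K_subfield: "is_subfield K" and K_grade_0: "K \<subseteq> Bg 0"
    and finite_E: "finite E" and E_subset: "E \<subseteq> veronese Bg d"
    and veronese_subset: "veronese Bg d \<subseteq> alg_gen K E"
begin

lemma to_fract_alg_gen: "to_fract ` alg_gen K E \<subseteq> laurent_ring"
proof (rule to_fract_alg_gen_subset[OF laurent_ring_subring])
  show "to_fract ` K \<subseteq> laurent_ring"
    using K_grade_0 to_fract_homogeneous_in_laurent_ring nsm_in_cyc[of 0 d] by auto
  show "to_fract ` E \<subseteq> laurent_ring" using E_subset to_fract_veronese_subset by blast
qed

lemma exists_denominator_bound:
  "\<exists>N. \<forall>x\<in>alg_gen K E. to_fract f ^ N * laurent_der (to_fract x) \<in> range to_fract"
proof (rule bounded_denominators[OF is_derivation_on_laurent_der f_nonzero finite_E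
      to_fract_alg_gen])
  fix k assume "k \<in> K"
  show "laurent_der (to_fract k) = 0"
  proof (cases "k = 0")
    case True
    then show ?thesis using derivation_0[OF laurent_ring_subring is_derivation_on_laurent_der]
      by simp
  next
    case False
    then obtain k' where "k' \<in> K" "k * k' = 1"
      using K_subfield \<open>k \<in> K\<close> unfolding is_subfield_def by blast
    then show ?thesis using laurent_der_unit K_grade_0 \<open>k \<in> K\<close> by blast
  qed
next
  fix e assume "e \<in> E"
  then have "laurent_der (to_fract e) \<in> laurent_ring"
    using E_subset to_fract_veronese_subset derivation_closed[OF is_derivation_on_laurent_der]
    by blast
  then show "laurent_der (to_fract e) \<in> localize (range to_fract) (to_fract f)"
    using laurent_ring_subset_fractions by blast
qed

definition N :: nat where
  "N = (SOME N. \<forall>x\<in>alg_gen K E. to_fract f ^ N * laurent_der (to_fract x) \<in> range to_fract)"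

text \<open>The factor \<open>f\<^sup>N\<^sup>+\<^sup>1\<close> rather than \<open>f\<^sup>N\<close> makes the exponent of the power of \<open>f\<close> in the
  image positive.\<close>
definition D :: "'b \<Rightarrow> 'b" where
  "D x = inv to_fract (to_fract f ^ Suc N * laurent_der (to_fract x))"

lemma scaled_laurent_der_homogeneous:
  assumes "x \<in> Bg g" "g \<in> cyc d"
  shows "to_fract f ^ Suc N * laurent_der (to_fract x) \<in> to_fract ` Bg (g + nsm (Suc N) d)"
proof -
  obtain b where b: "to_fract f ^ N * laurent_der (to_fract x) = to_fract b"
    using someI_ex[OF exists_denominator_bound] veronese_subset homogeneous_in_veronese[OF assms]
    unfolding N_def[symmetric] by blast
  obtain a m where
    a: "a \<in> Bg (g + nsm m d)" "laurent_der (to_fract x) = to_fract a / to_fract f ^ m"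
    using laurent_der_homogeneous[OF assms] .
  have "to_fract (b * f ^ m) = to_fract (f ^ N * a)"
    using b a(2) to_fract_f_nonzero by (simp add: to_fract_power field_simps)
  then have "b * f ^ m = f ^ N * a" by (simp only: to_fract_eq_iff)
  then have "f ^ m * (f * b) = f ^ Suc N * a" by (simp add: algebra_simps)
  also have "\<dots> \<in> Bg (nsm (Suc N) d + (g + nsm m d))" by (rule grade_mult[OF f_power_in a(1)])
  finally have "f * b \<in> Bg (nsm (Suc N) d + (g + nsm m d) - nsm m d)"
    by (rule homogeneous_cancel[OF f_power_in power_not_zero[OF f_nonzero]])
  then have "f * b \<in> Bg (g + nsm (Suc N) d)" by (simp add: algebra_simps)
  moreover have "to_fract f ^ Suc N * laurent_der (to_fract x) = to_fract (f * b)"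
    using b by simp
  ultimately show ?thesis by blast
qed

lemma scaled_laurent_der_veronese:
  assumes "x \<in> veronese Bg d"
  shows "to_fract f ^ Suc N * laurent_der (to_fract x) \<in> to_fract ` veronese Bg d"
proof -
  let ?\<Delta> = "\<lambda>y. to_fract f ^ Suc N * laurent_der y"
  let ?I = "{i. hcomp x i \<noteq> 0}"
  have cyc: "i \<in> ?I \<Longrightarrow> i \<in> cyc d" for i using assms unfolding veronese_iff by blast
  have "\<forall>i\<in>?I. \<exists>b. b \<in> Bg (i + nsm (Suc N) d) \<and> ?\<Delta> (to_fract (hcomp x i)) = to_fract b"
    using scaled_laurent_der_homogeneous[OF hcomp_in_grade cyc] by blast
  then obtain b where b: "\<And>i. i \<in> ?I \<Longrightarrow> b i \<in> Bg (i + nsm (Suc N) d)"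
    "\<And>i. i \<in> ?I \<Longrightarrow> ?\<Delta> (to_fract (hcomp x i)) = to_fract (b i)" by metis
  have "to_fract x = to_fract (\<Sum>i\<in>?I. hcomp x i)" by (simp only: sum_hcomp)
  also have "\<dots> = (\<Sum>i\<in>?I. to_fract (hcomp x i))" by (rule to_fract_sum)
  finally have "laurent_der (to_fract x) = (\<Sum>i\<in>?I. laurent_der (to_fract (hcomp x i)))"
    using derivation_sum[OF laurent_ring_subring is_derivation_on_laurent_der,
        of ?I "\<lambda>i. to_fract (hcomp x i)",
        OF to_fract_homogeneous_in_laurent_ring[OF hcomp_in_grade cyc]]
    by simp
  then have "?\<Delta> (to_fract x) = (\<Sum>i\<in>?I. ?\<Delta> (to_fract (hcomp x i)))"
    by (simp add: sum_distrib_left)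
  also have "\<dots> = to_fract (\<Sum>i\<in>?I. b i)" using b(2) by simp
  finally have "?\<Delta> (to_fract x) = to_fract (\<Sum>i\<in>?I. b i)" .
  moreover have "(\<Sum>i\<in>?I. b i) \<in> veronese Bg d"
    using homogeneous_in_veronese[OF b(1) cyc_add[OF cyc nsm_in_cyc]] by (rule veronese_sum)
  ultimately show ?thesis by blast
qed

lemma scaled_laurent_der_derivation:
  "is_derivation_on laurent_ring (\<lambda>y. to_fract f ^ Suc N * laurent_der y)"
  by (rule is_derivation_on_scaled[OF laurent_ring_subring is_derivation_on_laurent_der
        subring_power[OF laurent_ring_subring f_in_laurent_ring]])

lemma is_derivation_on_D: "is_derivation_on (veronese Bg d) D"
  unfolding D_def
  by (rule is_derivation_on_restricted[OF scaled_laurent_der_derivation to_fract_veronese_subset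
        scaled_laurent_der_veronese])

lemma locally_nilpotent_on_D: "locally_nilpotent_on (veronese Bg d) D"
  unfolding D_def
  by (rule locally_nilpotent_on_restricted[OF scaled_laurent_der_derivation to_fract_veronese_subset
        scaled_laurent_der_veronese locally_nilpotent_on_scaled[OF laurent_ring_subring
        is_derivation_on_laurent_der subring_power[OF laurent_ring_subring f_in_laurent_ring]
        derivation_power_const[OF laurent_ring_subring is_derivation_on_laurent_der
          f_in_laurent_ring laurent_der_f] locally_nilpotent_on_laurent_der]])

lemma D_0: "D 0 = 0"
  using derivation_0[OF laurent_ring_subring is_derivation_on_laurent_der] inv_to_fract[of 0]
  unfolding D_def by simp

lemma D_homogeneous:
  assumes "x \<in> Bg i" "x \<in> veronese Bg d"
  shows "D x \<in> Bg (i + nsm (Suc N) d)"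
proof (cases "x = 0")
  case False
  then obtain b where "b \<in> Bg (i + nsm (Suc N) d)"
    "to_fract f ^ Suc N * laurent_der (to_fract x) = to_fract b"
    using scaled_laurent_der_homogeneous[OF assms(1) degree_in_cyc[OF assms(1) False assms(2)]]
    by blast
  then show ?thesis unfolding D_def by simp
qed (simp add: D_0)

lemma D_f_power: "D (f ^ n) = 0"
  using derivation_power_const[OF laurent_ring_subring is_derivation_on_laurent_der
      f_in_laurent_ring laurent_der_f, of n]
  unfolding D_def using inv_to_fract[of 0] by (simp add: to_fract_power)

lemma D_hits_f_power:
  obtains a m where "a \<in> veronese Bg d" "D a = f ^ (Suc N + m)"
proof -
  let ?\<phi> = "to_fract f"
  have t: "t \<in> deg0_loc Bg d f" using var_in_adjoin[OF A_subring] deg0_loc_adjoin by simp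
  then obtain a m where a: "a \<in> Bg (nsm m d)" "t = to_fract a / ?\<phi> ^ m"
    unfolding deg0_loc_iff by blast
  have t_laurent: "t \<in> laurent_ring"
    using t subset_adjoin[OF deg0_loc_subring] laurent.subset_localize by blast
  have "to_fract a = ?\<phi> ^ m * t" using a(2) to_fract_f_nonzero by simp
  then have "laurent_der (to_fract a) = ?\<phi> ^ m"
    using derivation_mult_const[OF laurent_ring_subring is_derivation_on_laurent_der
        subring_power[OF laurent_ring_subring f_in_laurent_ring]
        derivation_power_const[OF laurent_ring_subring is_derivation_on_laurent_der
          f_in_laurent_ring laurent_der_f] t_laurent] laurent_der_t
    by simp
  moreover have "to_fract f ^ Suc N * to_fract f ^ m = to_fract (f ^ (Suc N + m))"
    by (simp add: to_fract_power power_add)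
  ultimately have "D a = f ^ (Suc N + m)"
    unfolding D_def by (simp only: inv_to_fract)
  moreover have "a \<in> veronese Bg d" using homogeneous_in_veronese[OF a(1) nsm_in_cyc] .
  ultimately show ?thesis using that by blast
qed

end

theorem proposition4p6:
  fixes Bg :: "'g::ab_group_add \<Rightarrow> 'b::idom set"
    and K :: "'b set" and f :: "'b" and d :: "'g"
  assumes "is_grading Bg"
    and "is_subfield K"
    and "\<And>n::nat. n > 0 \<Longrightarrow> (of_nat n :: 'b) \<noteq> 0"
    and "K \<subseteq> Bg 0"
    and "finitely_generated_algebra K"
    and "cylindrical Bg f"
    and "f \<in> Bg d"
  shows "\<exists>D. is_derivation_on (veronese Bg d) D
           \<and> locally_nilpotent_on (veronese Bg d) D
           \<and> homogeneous_derivation_on Bg (veronese Bg d) D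
           \<and> (\<exists>x\<in>veronese Bg d. D x \<noteq> 0)
           \<and> (\<exists>x\<in>veronese Bg d. D x = 0 \<and> x \<notin> Bg 0)
           \<and> (\<exists>n\<ge>1. f ^ n \<in> D ` veronese Bg d \<and> D (f ^ n) = 0)"
proof -
  interpret graded_domain Bg by unfold_locales (rule assms(1))
  have K: "is_subring K" using assms(2) unfolding is_subfield_def by blast
  obtain E where E: "finite E" "E \<subseteq> veronese Bg d" "veronese Bg d \<subseteq> alg_gen K E"
    using finitely_generated_veronese[OF K assms(4,5)] by blast
  obtain A t where "cylinder Bg d f A t"
    using cylinder_if_cylindrical[OF assms(6,7)] by blast
  then interpret cylinder_with_generators Bg d f A t K E
    by (intro cylinder_with_generators.intro cylinder_with_generators_axioms.intro)
      (use assms(2,4) E in auto)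
  obtain a m where a: "a \<in> veronese Bg d" "D a = f ^ (Suc N + m)"
    by (rule D_hits_f_power)
  have f: "f \<in> veronese Bg d"
    using homogeneous_in_veronese[OF f_power_in[of 1] nsm_in_cyc] by simp
  show ?thesis
  proof (intro exI[of _ D] conjI)
    show "homogeneous_derivation_on Bg (veronese Bg d) D"
      unfolding homogeneous_derivation_on_def using D_homogeneous by blast
    show "\<exists>x\<in>veronese Bg d. D x \<noteq> 0" using a f_nonzero by (intro bexI[of _ a]) simp_all
    show "\<exists>x\<in>veronese Bg d. D x = 0 \<and> x \<notin> Bg 0" using f D_f_power[of 1] f_not_in_grade_0 by auto
    show "\<exists>n\<ge>1. f ^ n \<in> D ` veronese Bg d \<and> D (f ^ n) = 0"
      using image_eqI[where f = D, OF a(2)[symmetric] a(1)] D_f_power[of "Suc N + m"]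
      by (intro exI[of _ "Suc N + m"]) simp
  qed (rule is_derivation_on_D locally_nilpotent_on_D)+
qed

end
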